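(* Let $\mathbf p=(p_j(X))_{j\ge1,\,X\in\mathcal X}$ follow the dependent GEM prior $\mathrm{DGEM}(M)$ with $M>0$ (defined in the context), and let $H_{\mathrm{Simp}}(X)=1-\sum_{j\ge1}p_j(X)^2$ be the Simpson diversity at covariate $X$. Then for every $X\in\mathcal X$, $$\mathbb E\big(H_{\mathrm{Simp}}(X)\big)=\frac{M}{1+M},\qquad \operatorname{Var}\big(H_{\mathrm{Simp}}(X)\big)=\frac{2M}{(M+1)^2(M+2)(M+3)},$$ and for any two covariates $X_1,X_2\in\mathcal X$, $$\operatorname{Cov}\big(H_{\mathrm{Simp}}(X_1),H_{\mathrm{Simp}}(X_2)\big)=\frac{\nu_{2,2}(1-\omega_{2,0})+2\nu_{2,0}\gamma_{2,2}}{(1-\omega_{2,0})(1-\omega_{2,2})}-\nu_{1,0}^2,$$ where, with $V=V_1$ one of the Beta processes of the construction, $\nu_{i,j}=\mathbb E[V(X_1)^iV(X_2)^j]$, $\omega_{i,j}=\mathbb E[(1-V(X_1))^i(1-V(X_2))^j]$ and $\gamma_{i,j}=\mathbb E[V(X_1)^i(1-V(X_2))^j]$.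
   Context: Dependent GEM prior $\mathrm{DGEM}(M)$: let $\mathcal X\subset\mathbb R$ be the covariate space, $M>0$, $\sigma_Z>0$, and let $\tilde K_\lambda$ be a normalized covariance function on $\mathcal X$ (i.e. $\tilde K_\lambda(X,X)=1$) depending only on $X_1-X_2$, e.g. squared exponential $\exp(-(X_1-X_2)^2/(2\lambda^2))$, Ornstein–Uhlenbeck $\exp(-|X_1-X_2|/\lambda)$ or rational quadratic $(1+(X_1-X_2)^2/(2\lambda^2))^{-1}$. Let $Z_1,Z_2,\dots$ be i.i.d. centered Gaussian processes on $\mathcal X$ with covariance $\sigma_Z^2\tilde K_\lambda$. Let $\Phi_{\sigma_Z}$ be the CDF of $\mathcal N(0,\sigma_Z^2)$ and $F_M^{-1}(u)=1-(1-u)^{1/M}$ the inverse CDF of the $\mathrm{Beta}(1,M)$ distribution. Set $V_j(X)=F_M^{-1}(\Phi_{\sigma_Z}(Z_j(X)))$ (so each $V_j(X)\sim\mathrm{Beta}(1,M)$), and define by stick-breaking $p_1(X)=V_1(X)$, $p_j(X)=V_j(X)\prod_{l<j}(1-V_l(X))$ for $j>1$. *)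

theory Defs
  imports "HOL-Probability.Probability"
begin

definition gauss_law :: "real \<Rightarrow> real measure" where
  "gauss_law v = (if v = 0 then return borel 0
                  else density lborel (\<lambda>t. ennreal (normal_density 0 (sqrt v) t)))"

definition centered_gaussian_process ::
  "'a measure \<Rightarrow> real set \<Rightarrow> (real \<Rightarrow> real \<Rightarrow> real) \<Rightarrow> (real \<Rightarrow> 'a \<Rightarrow> real) \<Rightarrow> bool" where
  "centered_gaussian_process P S C Z \<longleftrightarrow>
     (\<forall>x\<in>S. Z x \<in> borel_measurable P) \<and>
     (\<forall>(xs::real list) (cs::real list). length cs = length xs \<and> set xs \<subseteq> S \<longrightarrow>
        distr P borel (\<lambda>\<omega>. \<Sum>i<length xs. cs ! i * Z (xs ! i) \<omega>) =
        gauss_law (\<Sum>i<length xs. \<Sum>k<length xs. cs ! i * cs ! k * C (xs ! i) (xs ! k)))"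

definition Phi :: "real \<Rightarrow> real \<Rightarrow> real" where
  "Phi \<sigma> t = measure (density lborel (\<lambda>s. ennreal (normal_density 0 \<sigma> s))) {..t}"

definition Beta_inv_cdf :: "real \<Rightarrow> real \<Rightarrow> real" where
  "Beta_inv_cdf M u = 1 - (1 - u) powr (1 / M)"

text \<open>Stick-breaking weights, indices shifted to start at 0:
  stick V 0 = V 0, stick V j = V j * prod_{l<j} (1 - V l).\<close>
definition stick :: "(nat \<Rightarrow> real) \<Rightarrow> nat \<Rightarrow> real" where
  "stick V j = V j * (\<Prod>l<j. 1 - V l)"

definition simpson :: "(nat \<Rightarrow> real) \<Rightarrow> real" where
  "simpson p = 1 - (\<Sum>j. (p j)\<^sup>2)"

end

theory Submission
  imports Defs
begin

text \<open>
  Each \<open>p\<^sub>j(x)\<^sup>2\<close> is a product over the sticks of factors \<open>(1 - V\<^sub>l(x))\<^sup>2\<close> (\<open>l < j\<close>), \<open>V\<^sub>j(x)\<^sup>2\<close>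
  and \<open>1\<close> (\<open>l > j\<close>). The sticks are i.i.d. processes, so \<open>E (p\<^sub>j(x\<^sub>1)\<^sup>2 p\<^sub>k(x\<^sub>2)\<^sup>2)\<close> is a product of
  one-stick moments \<open>m a b = E (\<phi>\<^sub>a(V(x\<^sub>1)) \<phi>\<^sub>b(V(x\<^sub>2)))\<close> with \<open>\<phi>\<^sub>a(t) \<in> {1, t\<^sup>2, (1 - t)\<^sup>2}\<close>, and the
  double series over \<open>j, k\<close> is geometric in \<open>m 2 2\<close>, \<open>m 2 0\<close>, \<open>m 0 2\<close> and sums in closed form.
  At a single point, \<open>\<Phi>\<^sub>\<sigma>(Z(x))\<close> is uniform (probability integral transform), so
  \<open>E (1 - V(x))\<^sup>k = E (U powr (k / M)) = M / (M + k)\<close>, which gives all one-point moments, hence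
  the mean and the variance. The Gaussian hypothesis only fixes the laws of linear combinations
  \<open>a Z(x) + b Z(y)\<close>; a Cram\'er--Wold argument (approximation by trigonometric polynomials)
  turns this into equality of the mixed moments across sticks and into \<open>m 2 1 = m 1 2\<close>.
\<close>

section \<open>Trigonometric polynomials\<close>

definition cos_term :: "real \<Rightarrow> real \<times> real \<times> real \<Rightarrow> real" where
  "cos_term x t = (case t of (w, m, c) \<Rightarrow> w * cos (m * x + c))"

definition cos_term2 :: "real \<Rightarrow> real \<Rightarrow> real \<times> real \<times> real \<times> real \<Rightarrow> real" where
  "cos_term2 x y t = (case t of (w, a, b, c) \<Rightarrow> w * cos (a * x + b * y + c))"

definition trig_poly :: "(real \<Rightarrow> real) \<Rightarrow> bool" where
  "trig_poly f \<longleftrightarrow> (\<exists>ts. \<forall>x. f x = (\<Sum>t\<leftarrow>ts. cos_term x t))"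

definition trig_poly2 :: "(real \<Rightarrow> real \<Rightarrow> real) \<Rightarrow> bool" where
  "trig_poly2 f \<longleftrightarrow> (\<exists>ts. \<forall>x y. f x y = (\<Sum>t\<leftarrow>ts. cos_term2 x y t))"

text \<open>Product formula \<open>cos u cos v = (cos (u - v) + cos (u + v)) / 2\<close>, on coefficient triples.\<close>
definition cos_term_mult :: "real \<times> real \<times> real \<Rightarrow> real \<times> real \<times> real \<Rightarrow> (real \<times> real \<times> real) list" where
  "cos_term_mult s t = (case s of (w, m, c) \<Rightarrow> case t of (w', m', c') \<Rightarrow>
     [(w * w' / 2, m - m', c - c'), (w * w' / 2, m + m', c + c')])"

definition cos_term_tensor :: "real \<times> real \<times> real \<Rightarrow> real \<times> real \<times> real \<Rightarrow> (real \<times> real \<times> real \<times> real) list" where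
  "cos_term_tensor s t = (case s of (w, m, c) \<Rightarrow> case t of (w', m', c') \<Rightarrow>
     [(w * w' / 2, m, - m', c - c'), (w * w' / 2, m, m', c + c')])"

lemma sum_list_mult_sum_list:
  "(\<Sum>a\<leftarrow>xs. f a) * (\<Sum>b\<leftarrow>ys. g b) = (\<Sum>a\<leftarrow>xs. \<Sum>b\<leftarrow>ys. f a * g b :: real)"
  by (induct xs) (auto simp: distrib_right sum_list_const_mult)

lemma sum_list_concat_map:
  "(\<Sum>x\<leftarrow>concat (map f xs). g x) = (\<Sum>a\<leftarrow>xs. \<Sum>x\<leftarrow>f a. g x :: real)"
  by (induct xs) auto

text \<open>Stated in the shape of a sum over a two-element list.\<close>
lemma mult_scaled_half_sum:
  assumes "(P :: real) * Q = (R + S) / 2"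
  shows "(w * P) * (w' * Q) = w * w' / 2 * R + (w * w' / 2 * S + 0)"
proof -
  have "(w * P) * (w' * Q) = w * w' * (P * Q)" by (simp add: ac_simps)
  then show ?thesis unfolding assms by (simp add: algebra_simps)
qed

lemma cos_term_mult: "cos_term x s * cos_term x t = (\<Sum>u\<leftarrow>cos_term_mult s t. cos_term x u)"
proof -
  obtain w m c w' m' c' where st: "s = (w, m, c)" "t = (w', m', c')" by (cases s, cases t) auto
  have "cos (m * x + c) * cos (m' * x + c') = (cos ((m * x + c) - (m' * x + c')) + cos ((m * x + c) + (m' * x + c'))) / 2"
    by (rule cos_times_cos)
  also have "(m * x + c) - (m' * x + c') = (m - m') * x + (c - c')" by (simp add: algebra_simps)
  also have "(m * x + c) + (m' * x + c') = (m + m') * x + (c + c')" by (simp add: algebra_simps)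
  finally have "cos (m * x + c) * cos (m' * x + c') = (cos ((m - m') * x + (c - c')) + cos ((m + m') * x + (c + c'))) / 2" .
  then show ?thesis unfolding st cos_term_mult_def cos_term_def
    by (simp only: prod.case list.map sum_list_simps) (rule mult_scaled_half_sum)
qed

lemma cos_term_tensor: "cos_term x s * cos_term y t = (\<Sum>u\<leftarrow>cos_term_tensor s t. cos_term2 x y u)"
proof -
  obtain w m c w' m' c' where st: "s = (w, m, c)" "t = (w', m', c')" by (cases s, cases t) auto
  have "cos (m * x + c) * cos (m' * y + c') = (cos ((m * x + c) - (m' * y + c')) + cos ((m * x + c) + (m' * y + c'))) / 2"
    by (rule cos_times_cos)
  also have "(m * x + c) - (m' * y + c') = m * x + - m' * y + (c - c')" by (simp add: algebra_simps)
  also have "(m * x + c) + (m' * y + c') = m * x + m' * y + (c + c')" by (simp add: algebra_simps)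
  finally have "cos (m * x + c) * cos (m' * y + c') = (cos (m * x + - m' * y + (c - c')) + cos (m * x + m' * y + (c + c'))) / 2" .
  then show ?thesis unfolding st cos_term_tensor_def cos_term_def cos_term2_def
    by (simp only: prod.case list.map sum_list_simps) (rule mult_scaled_half_sum)
qed

lemma trig_poly_const: "trig_poly (\<lambda>x. c)"
  unfolding trig_poly_def by (rule exI[of _ "[(c, 0, 0)]"]) (simp add: cos_term_def)

lemma trig_poly_add: "trig_poly f \<Longrightarrow> trig_poly g \<Longrightarrow> trig_poly (\<lambda>x. f x + g x)"
  unfolding trig_poly_def by (metis (no_types) sum_list_append map_append)

lemma trig_poly_mult:
  assumes "trig_poly f" "trig_poly g"
  shows "trig_poly (\<lambda>x. f x * g x)"
proof -
  obtain ss ts where f: "\<And>x. f x = (\<Sum>s\<leftarrow>ss. cos_term x s)" and g: "\<And>x. g x = (\<Sum>t\<leftarrow>ts. cos_term x t)"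
    using assms unfolding trig_poly_def by blast
  have "f x * g x = (\<Sum>u\<leftarrow>concat (map (\<lambda>s. concat (map (cos_term_mult s) ts)) ss). cos_term x u)" for x
    unfolding f g sum_list_mult_sum_list cos_term_mult sum_list_concat_map ..
  then show ?thesis unfolding trig_poly_def by blast
qed

lemma trig_poly_scale: "trig_poly f \<Longrightarrow> trig_poly (\<lambda>x. f (\<alpha> * x))"
proof -
  assume "trig_poly f"
  then obtain ts where f: "\<And>x. f x = (\<Sum>t\<leftarrow>ts. cos_term x t)" unfolding trig_poly_def by blast
  have "f (\<alpha> * x) = (\<Sum>t\<leftarrow>map (\<lambda>(w, m, c). (w, m * \<alpha>, c)) ts. cos_term x t)" for x
    by (simp add: f o_def split_def cos_term_def mult.assoc)
  then show ?thesis unfolding trig_poly_def by blast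
qed

lemma trig_poly2_tensor:
  assumes "trig_poly f" "trig_poly g"
  shows "trig_poly2 (\<lambda>x y. f x * g y)"
proof -
  obtain ss ts where f: "\<And>x. f x = (\<Sum>s\<leftarrow>ss. cos_term x s)" and g: "\<And>x. g x = (\<Sum>t\<leftarrow>ts. cos_term x t)"
    using assms unfolding trig_poly_def by blast
  have "f x * g y = (\<Sum>u\<leftarrow>concat (map (\<lambda>s. concat (map (cos_term_tensor s) ts)) ss). cos_term2 x y u)" for x y
    unfolding f g sum_list_mult_sum_list cos_term_tensor sum_list_concat_map ..
  then show ?thesis unfolding trig_poly2_def by blast
qed

lemma bounded_linear_complex_real:
  assumes "bounded_linear (p :: complex \<Rightarrow> real)"
  shows "p z = Re z * p 1 + Im z * p \<i>"
proof -
  interpret bounded_linear p by (fact assms)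
  have "z = Re z *\<^sub>R 1 + Im z *\<^sub>R \<i>" by (simp add: complex_eq_iff)
  then have "p z = p (Re z *\<^sub>R 1 + Im z *\<^sub>R \<i>)" by simp
  also have "\<dots> = Re z * p 1 + Im z * p \<i>" by (simp add: add scale)
  finally show ?thesis .
qed

lemma trig_poly_real_polynomial_cis:
  "real_polynomial_function (p :: complex \<Rightarrow> real) \<Longrightarrow> trig_poly (\<lambda>x. p (cis x))"
proof (induct rule: real_polynomial_function.induct)
  case (linear f)
  have "f (cis x) = (\<Sum>t\<leftarrow>[(f 1, 1, 0), (f \<i>, 1, - pi / 2)]. cos_term x t)" for x
    using bounded_linear_complex_real[OF linear, of "cis x"] by (simp add: cos_term_def cos_diff)
  then show ?case unfolding trig_poly_def by blast
qed (auto intro: trig_poly_const trig_poly_add trig_poly_mult)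

text \<open>\<open>Arg\<close> jumps only on the negative real axis, near which \<open>g (Arg u / \<alpha>)\<close> vanishes.\<close>
lemma continuous_on_sphere_Arg_compose:
  fixes g :: "real \<Rightarrow> real"
  assumes g: "continuous_on UNIV g" and vanish: "\<And>x. T < \<bar>x\<bar> \<Longrightarrow> g x = 0"
    and \<alpha>: "0 < \<alpha>" and T: "0 \<le> T" "\<alpha> * T < pi"
  shows "continuous_on (sphere 0 1) (\<lambda>u. g (Arg u / \<alpha>))"
proof -
  define c where "c = cos (\<alpha> * T)"
  have zero: "g (Arg z / \<alpha>) = 0" if z: "norm z = 1" "Re z < c" for z
  proof -
    have "z \<noteq> 0" using z by auto
    then have "z = cis (Arg z)" using z Arg_eq[of z] by (simp add: cis_conv_exp)
    then have "Re z = cos \<bar>Arg z\<bar>" by (metis cis.sel(1) cos_abs_real)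
    then have "\<not> \<bar>Arg z\<bar> \<le> \<alpha> * T"
      using z \<alpha> T cos_monotone_0_pi_le[of "\<bar>Arg z\<bar>" "\<alpha> * T"] unfolding c_def by auto
    then have "T < \<bar>Arg z / \<alpha>\<bar>" using \<alpha> by (simp add: field_simps abs_div)
    then show ?thesis by (rule vanish)
  qed
  have "continuous (at u within sphere 0 1) (\<lambda>u. g (Arg u / \<alpha>))" if u: "u \<in> sphere 0 1" for u
  proof (cases "Re u < c")
    case True
    have "eventually (\<lambda>z. g (Arg z / \<alpha>) = g (Arg u / \<alpha>)) (at u within sphere 0 1)"
      unfolding eventually_at_topological
      by (rule exI[of _ "{z. Re z < c}"]) (use True u zero in \<open>auto intro: open_halfspace_Re_lt\<close>)
    then show ?thesis unfolding continuous_within by (rule tendsto_eventually)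
  next
    case False
    have "cos pi < c" unfolding c_def using \<alpha> T by (intro cos_monotone_0_pi) auto
    with False u have "u \<notin> \<real>\<^sub>\<le>\<^sub>0" by (auto simp: complex_nonpos_Reals_iff cmod_def power2_eq_1_iff)
    then have "continuous (at u) (\<lambda>u. Arg u / \<alpha>)" by (intro continuous_intros continuous_at_Arg) (use \<alpha> in auto)
    moreover have "isCont g (Arg u / \<alpha>)" using g by (simp add: continuous_on_eq_continuous_at)
    ultimately have "continuous (at u) (\<lambda>u. g (Arg u / \<alpha>))" by (rule isCont_o2)
    then show ?thesis by (rule continuous_at_imp_continuous_within)
  qed
  then show ?thesis by (simp add: continuous_on_eq_continuous_within)
qed

text \<open>Cut \<open>f\<close> off outside \<open>[-R-1, R+1]\<close>, wrap the line onto the unit circle and approximate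
  there by a real polynomial (Stone--Weierstrass); pulled back, that polynomial is a trigonometric
  polynomial.\<close>
lemma trig_poly_approx:
  fixes f :: "real \<Rightarrow> real"
  assumes f: "continuous_on UNIV f" "\<And>x. \<bar>f x\<bar> \<le> B" and R: "R > 0" and e: "e > 0"
  obtains p where "trig_poly p" "continuous_on UNIV p"
    "\<And>x. \<bar>x\<bar> \<le> R \<Longrightarrow> \<bar>f x - p x\<bar> < e" "\<And>x. \<bar>p x\<bar> \<le> B + e"
proof -
  define \<alpha> where "\<alpha> = pi / (R + 2)"
  have \<alpha>: "\<alpha> > 0" "\<alpha> * (R + 1) < pi" using R by (auto simp: \<alpha>_def field_simps)
  define h where "h x = f x * max 0 (min 1 (R + 1 - \<bar>x\<bar>))" for x
  have h_cont: "continuous_on UNIV h" unfolding h_def using f(1) by (intro continuous_intros) auto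
  have h_bound: "\<bar>h x\<bar> \<le> B" for x
  proof -
    have "\<bar>h x\<bar> \<le> \<bar>f x\<bar> * 1" unfolding h_def abs_mult by (intro mult_left_mono) auto
    with f(2)[of x] show ?thesis by simp
  qed
  have "continuous_on (sphere 0 1) (\<lambda>u. h (Arg u / \<alpha>))"
    using h_cont \<alpha> R by (intro continuous_on_sphere_Arg_compose[where T = "R + 1"]) (auto simp: h_def)
  then obtain g where g: "real_polynomial_function g" "\<And>u. u \<in> sphere 0 1 \<Longrightarrow> \<bar>h (Arg u / \<alpha>) - g u\<bar> < e"
    using Stone_Weierstrass_real_polynomial_function[OF compact_sphere _ e] by blast
  define p where "p x = g (cis (\<alpha> * x))" for x
  have g_approx: "\<bar>h (Arg (cis (\<alpha> * x)) / \<alpha>) - p x\<bar> < e" for x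
    using g(2)[of "cis (\<alpha> * x)"] by (simp add: p_def)
  have "trig_poly p" unfolding p_def by (rule trig_poly_scale[OF trig_poly_real_polynomial_cis[OF g(1)]])
  moreover have "continuous_on UNIV p"
  proof -
    have "continuous_on UNIV g"
      using continuous_real_polymonial_function[OF g(1)] by (simp add: continuous_at_imp_continuous_on)
    moreover have "continuous_on UNIV (\<lambda>x. cis (\<alpha> * x))" by (intro continuous_intros)
    ultimately show ?thesis unfolding p_def by (rule continuous_on_compose2) auto
  qed
  moreover have "\<bar>f x - p x\<bar> < e" if x: "\<bar>x\<bar> \<le> R" for x
  proof -
    have "\<bar>\<alpha> * x\<bar> = \<alpha> * \<bar>x\<bar>" using \<alpha> by (simp add: abs_mult)
    also have "\<dots> \<le> \<alpha> * (R + 1)" using x \<alpha> by (intro mult_left_mono) auto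
    finally have "Arg (cis (\<alpha> * x)) / \<alpha> = x" using \<alpha> by (subst Arg_cis) auto
    moreover have "h x = f x" using x by (simp add: h_def min_def max_def)
    ultimately show ?thesis using g_approx[of x] by simp
  qed
  moreover have "\<bar>p x\<bar> \<le> B + e" for x using g_approx[of x] h_bound[of "Arg (cis (\<alpha> * x)) / \<alpha>"] by linarith
  ultimately show ?thesis using that by blast
qed

section \<open>Product moments determined by the laws of linear combinations\<close>

lemma zero_if_abs_le_multiple:
  fixes d K :: real
  assumes "\<And>e. 0 < e \<Longrightarrow> e \<le> 1 \<Longrightarrow> \<bar>d\<bar> \<le> K * e"
  shows "d = 0"
proof (rule dense_eq0_I)
  fix e :: real assume e: "0 < e"
  define e' where "e' = min 1 (e / (\<bar>K\<bar> + 1))"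
  have e': "0 < e'" "e' \<le> 1" using e by (auto simp: e'_def)
  have "(\<bar>K\<bar> + 1) * e' \<le> (\<bar>K\<bar> + 1) * (e / (\<bar>K\<bar> + 1))"
    unfolding e'_def by (intro mult_left_mono) auto
  then have Ke': "(\<bar>K\<bar> + 1) * e' \<le> e" by simp
  have "\<bar>d\<bar> \<le> K * e'" by (rule assms) (use e' in auto)
  also have "\<dots> \<le> (\<bar>K\<bar> + 1) * e'" using e' by (intro mult_right_mono) auto
  finally show "\<bar>d\<bar> \<le> e" using Ke' by linarith
qed

lemma abs_mult_diff_le:
  fixes a b c d B \<delta> :: real
  assumes "\<bar>a\<bar> \<le> B" "\<bar>b\<bar> \<le> B" "\<bar>c\<bar> \<le> B + 1" "\<bar>d\<bar> \<le> B + 1"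
  shows "\<bar>a * b - c * d\<bar> \<le> 2 * (B + 1)\<^sup>2"
    and "\<bar>a - c\<bar> \<le> \<delta> \<Longrightarrow> \<bar>b - d\<bar> \<le> \<delta> \<Longrightarrow> \<bar>a * b - c * d\<bar> \<le> \<delta> * (2 * B + 1)"
proof -
  have B: "0 \<le> B" using assms(1) by linarith
  have "\<bar>a * b - c * d\<bar> \<le> \<bar>a\<bar> * \<bar>b\<bar> + \<bar>c\<bar> * \<bar>d\<bar>" by (simp add: abs_mult[symmetric] abs_triangle_ineq4)
  also have "\<dots> \<le> B * B + (B + 1) * (B + 1)" using assms B by (intro add_mono mult_mono) auto
  also have "\<dots> \<le> 2 * (B + 1)\<^sup>2" using B by (simp add: power2_eq_square algebra_simps)
  finally show "\<bar>a * b - c * d\<bar> \<le> 2 * (B + 1)\<^sup>2" .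
  assume \<delta>: "\<bar>a - c\<bar> \<le> \<delta>" "\<bar>b - d\<bar> \<le> \<delta>"
  have "a * b - c * d = (a - c) * b + c * (b - d)" by (simp add: algebra_simps)
  then have "\<bar>a * b - c * d\<bar> \<le> \<bar>a - c\<bar> * \<bar>b\<bar> + \<bar>c\<bar> * \<bar>b - d\<bar>" by (simp add: abs_mult[symmetric] abs_triangle_ineq)
  also have "\<dots> \<le> \<delta> * B + (B + 1) * \<delta>" using assms \<delta> B by (intro add_mono mult_mono) auto
  finally show "\<bar>a * b - c * d\<bar> \<le> \<delta> * (2 * B + 1)" by (simp add: algebra_simps)
qed

lemma abs_diff_le_double:
  fixes a b c t :: real
  shows "\<bar>a - c\<bar> \<le> t \<Longrightarrow> \<bar>b - c\<bar> \<le> t \<Longrightarrow> \<bar>a - b\<bar> \<le> 2 * t"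
  by linarith

context prob_space
begin

lemma integral_trig_poly2_eq:
  fixes X1 X2 Y1 Y2 :: "'a \<Rightarrow> real"
  assumes [measurable]: "X1 \<in> borel_measurable M" "X2 \<in> borel_measurable M"
      "Y1 \<in> borel_measurable M" "Y2 \<in> borel_measurable M"
    and law: "\<And>a b. distr M borel (\<lambda>\<omega>. a * X1 \<omega> + b * X2 \<omega>) = distr M borel (\<lambda>\<omega>. a * Y1 \<omega> + b * Y2 \<omega>)"
    and "trig_poly2 \<phi>"
  shows "(\<integral>\<omega>. \<phi> (X1 \<omega>) (X2 \<omega>) \<partial>M) = (\<integral>\<omega>. \<phi> (Y1 \<omega>) (Y2 \<omega>) \<partial>M)"
proof -
  obtain ts where "\<And>x y. \<phi> x y = (\<Sum>t\<leftarrow>ts. cos_term2 x y t)"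
    using \<open>trig_poly2 \<phi>\<close> unfolding trig_poly2_def by blast
  then have \<phi>: "\<phi> x y = (\<Sum>i<length ts. cos_term2 x y (ts ! i))" for x y
    by (simp add: sum_list_sum_nth atLeast0LessThan)
  have integral_cos: "(\<integral>\<omega>. cos (a * U1 \<omega> + b * U2 \<omega> + c) \<partial>M)
      = (\<integral>s. cos (s + c) \<partial>distr M borel (\<lambda>\<omega>. a * U1 \<omega> + b * U2 \<omega>))"
    if [measurable]: "U1 \<in> borel_measurable M" "U2 \<in> borel_measurable M" for U1 U2 :: "'a \<Rightarrow> real" and a b c :: real
  proof -
    have [measurable]: "(\<lambda>s::real. cos (s + c)) \<in> borel_measurable borel" by measurable
    show ?thesis by (subst integral_distr) auto
  qed
  have term_eq: "(\<integral>\<omega>. cos_term2 (X1 \<omega>) (X2 \<omega>) t \<partial>M) = (\<integral>\<omega>. cos_term2 (Y1 \<omega>) (Y2 \<omega>) t \<partial>M)" for t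
    by (cases t) (simp add: cos_term2_def integral_cos law)
  have integrable_term: "integrable M (\<lambda>\<omega>. cos_term2 (U1 \<omega>) (U2 \<omega>) t)"
    if [measurable]: "U1 \<in> borel_measurable M" "U2 \<in> borel_measurable M" for U1 U2 :: "'a \<Rightarrow> real" and t
  proof -
    obtain w a b c where t: "t = (w, a, b, c)" by (cases t) auto
    show ?thesis unfolding t cos_term2_def
      by (rule integrable_const_bound[where B = "\<bar>w\<bar>"]) (auto simp: abs_mult intro!: mult_left_le)
  qed
  have "(\<integral>\<omega>. \<phi> (U1 \<omega>) (U2 \<omega>) \<partial>M) = (\<Sum>i<length ts. \<integral>\<omega>. cos_term2 (U1 \<omega>) (U2 \<omega>) (ts ! i) \<partial>M)"
    if [measurable]: "U1 \<in> borel_measurable M" "U2 \<in> borel_measurable M" for U1 U2 :: "'a \<Rightarrow> real"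
    unfolding \<phi> by (rule Bochner_Integration.integral_sum) (rule integrable_term, auto)
  then show ?thesis by (simp add: term_eq)
qed

lemma eventually_tail_prob_less:
  fixes X :: "'a \<Rightarrow> real"
  assumes [measurable]: "X \<in> borel_measurable M" and e: "e > 0"
  shows "eventually (\<lambda>R. prob {\<omega> \<in> space M. R < \<bar>X \<omega>\<bar>} < e) at_top"
proof -
  define A where "A n = {\<omega> \<in> space M. real n < \<bar>X \<omega>\<bar>}" for n :: nat
  have "(\<lambda>n. prob (A n)) \<longlonglongrightarrow> prob (\<Inter>n. A n)"
    by (rule finite_Lim_measure_decseq) (auto simp: A_def decseq_def)
  moreover have "(\<Inter>n. A n) = {}"
  proof safe
    fix \<omega> assume \<omega>: "\<omega> \<in> (\<Inter>n. A n)"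
    obtain n :: nat where "\<bar>X \<omega>\<bar> < real n" using reals_Archimedean2 by blast
    moreover have "\<omega> \<in> A n" using \<omega> by blast
    ultimately show "\<omega> \<in> {}" by (simp add: A_def)
  qed
  ultimately have "(\<lambda>n. prob (A n)) \<longlonglongrightarrow> 0" by simp
  then have "eventually (\<lambda>n. prob (A n) < e) sequentially" using e by (rule order_tendstoD)
  then obtain n where n: "prob (A n) < e" by (auto simp: eventually_sequentially)
  have "prob {\<omega> \<in> space M. R < \<bar>X \<omega>\<bar>} < e" if "real n \<le> R" for R
    using that by (intro le_less_trans[OF finite_measure_mono n]) (auto simp: A_def)
  then show ?thesis unfolding eventually_at_top_linorder by blast
qed

lemma integrable_bounded_product:
  fixes X1 X2 :: "'a \<Rightarrow> real" and f g :: "real \<Rightarrow> real"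
  assumes [measurable]: "X1 \<in> borel_measurable M" "X2 \<in> borel_measurable M"
      "f \<in> borel_measurable borel" "g \<in> borel_measurable borel"
    and f: "\<And>x. \<bar>f x\<bar> \<le> B" and g: "\<And>x. \<bar>g x\<bar> \<le> C"
  shows "integrable M (\<lambda>\<omega>. f (X1 \<omega>) * g (X2 \<omega>))"
proof -
  have "0 \<le> B" using f[of 0] by linarith
  then show ?thesis using f g
    by (intro integrable_const_bound[where B = "B * C"]) (auto simp: abs_mult intro!: AE_I2 mult_mono)
qed

lemma integral_product_approx:
  fixes X1 X2 :: "'a \<Rightarrow> real" and f g p q :: "real \<Rightarrow> real"
  assumes [measurable]: "X1 \<in> borel_measurable M" "X2 \<in> borel_measurable M"
      "f \<in> borel_measurable borel" "g \<in> borel_measurable borel"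
      "p \<in> borel_measurable borel" "q \<in> borel_measurable borel"
    and bounds: "\<And>x. \<bar>f x\<bar> \<le> B" "\<And>x. \<bar>g x\<bar> \<le> B" "\<And>x. \<bar>p x\<bar> \<le> B + 1" "\<And>x. \<bar>q x\<bar> \<le> B + 1"
    and approx: "\<And>x. \<bar>x\<bar> \<le> R \<Longrightarrow> \<bar>f x - p x\<bar> \<le> \<delta>" "\<And>x. \<bar>x\<bar> \<le> R \<Longrightarrow> \<bar>g x - q x\<bar> \<le> \<delta>"
    and \<delta>: "0 \<le> \<delta>" and tail: "prob {\<omega> \<in> space M. R < \<bar>X1 \<omega>\<bar> \<or> R < \<bar>X2 \<omega>\<bar>} \<le> \<eta>"
  shows "\<bar>(\<integral>\<omega>. f (X1 \<omega>) * g (X2 \<omega>) \<partial>M) - (\<integral>\<omega>. p (X1 \<omega>) * q (X2 \<omega>) \<partial>M)\<bar>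
    \<le> \<delta> * (2 * B + 1) + 2 * (B + 1)\<^sup>2 * \<eta>"
proof -
  define E where "E = {\<omega> \<in> space M. R < \<bar>X1 \<omega>\<bar> \<or> R < \<bar>X2 \<omega>\<bar>}"
  have [measurable]: "E \<in> sets M" unfolding E_def by measurable
  have B: "0 \<le> B" using bounds(1)[of 0] by linarith
  have pointwise: "\<bar>f (X1 \<omega>) * g (X2 \<omega>) - p (X1 \<omega>) * q (X2 \<omega>)\<bar>
      \<le> \<delta> * (2 * B + 1) + 2 * (B + 1)\<^sup>2 * indicator E \<omega>" if "\<omega> \<in> space M" for \<omega>
  proof (cases "\<omega> \<in> E")
    case True
    have "0 \<le> \<delta> * (2 * B + 1)" using \<delta> B by simp
    with True show ?thesis
      using abs_mult_diff_le(1)[OF bounds(1)[of "X1 \<omega>"] bounds(2)[of "X2 \<omega>"] bounds(3)[of "X1 \<omega>"]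
          bounds(4)[of "X2 \<omega>"]] by simp
  next
    case False
    then have "\<bar>X1 \<omega>\<bar> \<le> R" "\<bar>X2 \<omega>\<bar> \<le> R" using that by (auto simp: E_def)
    with False show ?thesis
      using abs_mult_diff_le(2)[OF bounds(1)[of "X1 \<omega>"] bounds(2)[of "X2 \<omega>"] bounds(3)[of "X1 \<omega>"]
          bounds(4)[of "X2 \<omega>"] approx] by simp
  qed
  have integrable: "integrable M (\<lambda>\<omega>. f (X1 \<omega>) * g (X2 \<omega>))" "integrable M (\<lambda>\<omega>. p (X1 \<omega>) * q (X2 \<omega>))"
    by (rule integrable_bounded_product[OF assms(1-4) bounds(1,2)],
        rule integrable_bounded_product[OF assms(1,2,5,6) bounds(3,4)])
  have "\<bar>(\<integral>\<omega>. f (X1 \<omega>) * g (X2 \<omega>) \<partial>M) - (\<integral>\<omega>. p (X1 \<omega>) * q (X2 \<omega>) \<partial>M)\<bar>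
      = \<bar>\<integral>\<omega>. f (X1 \<omega>) * g (X2 \<omega>) - p (X1 \<omega>) * q (X2 \<omega>) \<partial>M\<bar>"
    using integrable by simp
  also have "\<dots> \<le> (\<integral>\<omega>. \<bar>f (X1 \<omega>) * g (X2 \<omega>) - p (X1 \<omega>) * q (X2 \<omega>)\<bar> \<partial>M)"
    by (rule integral_abs_bound)
  also have "\<dots> \<le> (\<integral>\<omega>. \<delta> * (2 * B + 1) + 2 * (B + 1)\<^sup>2 * indicator E \<omega> \<partial>M)"
    using integrable pointwise by (intro integral_mono) (auto simp: emeasure_eq_measure)
  also have "\<dots> = \<delta> * (2 * B + 1) + 2 * (B + 1)\<^sup>2 * prob E"
    by (simp add: prob_space emeasure_eq_measure)
  also have "\<dots> \<le> \<delta> * (2 * B + 1) + 2 * (B + 1)\<^sup>2 * \<eta>"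
    using tail unfolding E_def by (intro add_left_mono mult_left_mono) auto
  finally show ?thesis .
qed

lemma eventually_tail_prob_pair_less:
  fixes X1 X2 :: "'a \<Rightarrow> real"
  assumes [measurable]: "X1 \<in> borel_measurable M" "X2 \<in> borel_measurable M" and "e > 0"
  shows "eventually (\<lambda>R. prob {\<omega> \<in> space M. R < \<bar>X1 \<omega>\<bar> \<or> R < \<bar>X2 \<omega>\<bar>} < e) at_top"
  using eventually_tail_prob_less[of "\<lambda>\<omega>. max \<bar>X1 \<omega>\<bar> \<bar>X2 \<omega>\<bar>" e] \<open>e > 0\<close>
  by (simp add: less_max_iff_disj)

text \<open>Equal laws of all linear combinations give equal integrals of trigonometric polynomials,
  and these approximate \<open>f\<close> and \<open>g\<close> uniformly on an interval carrying all but \<open>e\<close> of the mass.\<close>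
lemma abs_integral_product_diff_le_if_linear_laws_eq:
  fixes X1 X2 Y1 Y2 :: "'a \<Rightarrow> real" and f g :: "real \<Rightarrow> real"
  assumes [measurable]: "X1 \<in> borel_measurable M" "X2 \<in> borel_measurable M"
      "Y1 \<in> borel_measurable M" "Y2 \<in> borel_measurable M"
    and law: "\<And>a b. distr M borel (\<lambda>\<omega>. a * X1 \<omega> + b * X2 \<omega>) = distr M borel (\<lambda>\<omega>. a * Y1 \<omega> + b * Y2 \<omega>)"
    and f: "continuous_on UNIV f" "\<And>x. \<bar>f x\<bar> \<le> B"
    and g: "continuous_on UNIV g" "\<And>x. \<bar>g x\<bar> \<le> B"
    and e: "0 < e" "e \<le> 1"
  shows "\<bar>(\<integral>\<omega>. f (X1 \<omega>) * g (X2 \<omega>) \<partial>M) - (\<integral>\<omega>. f (Y1 \<omega>) * g (Y2 \<omega>) \<partial>M)\<bar>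
    \<le> ((2 * B + 1) + 4 * (B + 1)\<^sup>2) * e"
proof -
  have [measurable]: "f \<in> borel_measurable borel" "g \<in> borel_measurable borel"
    using f g by (auto intro: borel_measurable_continuous_onI)
  have "eventually (\<lambda>R. 0 < R \<and> prob {\<omega> \<in> space M. R < \<bar>X1 \<omega>\<bar> \<or> R < \<bar>X2 \<omega>\<bar>} < e
      \<and> prob {\<omega> \<in> space M. R < \<bar>Y1 \<omega>\<bar> \<or> R < \<bar>Y2 \<omega>\<bar>} < e) at_top"
    using e by (intro eventually_conj eventually_gt_at_top eventually_tail_prob_pair_less) auto
  then obtain R where R: "0 < R" "prob {\<omega> \<in> space M. R < \<bar>X1 \<omega>\<bar> \<or> R < \<bar>X2 \<omega>\<bar>} < e"
      "prob {\<omega> \<in> space M. R < \<bar>Y1 \<omega>\<bar> \<or> R < \<bar>Y2 \<omega>\<bar>} < e"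
    unfolding eventually_at_top_linorder by (meson order_refl)
  obtain p where p: "trig_poly p" "continuous_on UNIV p" "\<And>x. \<bar>x\<bar> \<le> R \<Longrightarrow> \<bar>f x - p x\<bar> < e / 2"
      "\<And>x. \<bar>p x\<bar> \<le> B + e / 2"
    using trig_poly_approx[OF f R(1), of "e / 2"] e by auto
  obtain q where q: "trig_poly q" "continuous_on UNIV q" "\<And>x. \<bar>x\<bar> \<le> R \<Longrightarrow> \<bar>g x - q x\<bar> < e / 2"
      "\<And>x. \<bar>q x\<bar> \<le> B + e / 2"
    using trig_poly_approx[OF g R(1), of "e / 2"] e by auto
  have [measurable]: "p \<in> borel_measurable borel" "q \<in> borel_measurable borel"
    using p(2) q(2) by (auto intro: borel_measurable_continuous_onI)
  have pq: "\<bar>p x\<bar> \<le> B + 1" "\<bar>q x\<bar> \<le> B + 1" for x using p(4)[of x] q(4)[of x] e by linarith+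
  have approx: "\<bar>f x - p x\<bar> \<le> e / 2" "\<bar>g x - q x\<bar> \<le> e / 2" if "\<bar>x\<bar> \<le> R" for x
    using p(3)[OF that] q(3)[OF that] by linarith+
  have X: "\<bar>(\<integral>\<omega>. f (X1 \<omega>) * g (X2 \<omega>) \<partial>M) - (\<integral>\<omega>. p (X1 \<omega>) * q (X2 \<omega>) \<partial>M)\<bar>
      \<le> e / 2 * (2 * B + 1) + 2 * (B + 1)\<^sup>2 * e"
    by (rule integral_product_approx) (use f(2) g(2) pq approx e less_imp_le[OF R(2)] in auto)
  have Y: "\<bar>(\<integral>\<omega>. f (Y1 \<omega>) * g (Y2 \<omega>) \<partial>M) - (\<integral>\<omega>. p (X1 \<omega>) * q (X2 \<omega>) \<partial>M)\<bar>
      \<le> e / 2 * (2 * B + 1) + 2 * (B + 1)\<^sup>2 * e"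
    unfolding integral_trig_poly2_eq[OF assms(1-4) law trig_poly2_tensor[OF p(1) q(1)]]
    by (rule integral_product_approx) (use f(2) g(2) pq approx e less_imp_le[OF R(3)] in auto)
  have "\<bar>(\<integral>\<omega>. f (X1 \<omega>) * g (X2 \<omega>) \<partial>M) - (\<integral>\<omega>. f (Y1 \<omega>) * g (Y2 \<omega>) \<partial>M)\<bar>
      \<le> 2 * (e / 2 * (2 * B + 1) + 2 * (B + 1)\<^sup>2 * e)"
    by (rule abs_diff_le_double[OF X Y])
  also have "\<dots> = ((2 * B + 1) + 4 * (B + 1)\<^sup>2) * e" by (simp add: algebra_simps)
  finally show ?thesis .
qed

lemma integral_product_eq_if_linear_laws_eq:
  fixes X1 X2 Y1 Y2 :: "'a \<Rightarrow> real" and f g :: "real \<Rightarrow> real"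
  assumes "X1 \<in> borel_measurable M" "X2 \<in> borel_measurable M"
      "Y1 \<in> borel_measurable M" "Y2 \<in> borel_measurable M"
    and "\<And>a b. distr M borel (\<lambda>\<omega>. a * X1 \<omega> + b * X2 \<omega>) = distr M borel (\<lambda>\<omega>. a * Y1 \<omega> + b * Y2 \<omega>)"
    and "continuous_on UNIV f" "\<And>x. \<bar>f x\<bar> \<le> B"
    and "continuous_on UNIV g" "\<And>x. \<bar>g x\<bar> \<le> B"
  shows "(\<integral>\<omega>. f (X1 \<omega>) * g (X2 \<omega>) \<partial>M) = (\<integral>\<omega>. f (Y1 \<omega>) * g (Y2 \<omega>) \<partial>M)"
  using zero_if_abs_le_multiple[OF abs_integral_product_diff_le_if_linear_laws_eq[OF assms]] by simp

end

section \<open>Probability integral transform and Beta moments\<close>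

abbreviation uniform01 :: "real measure" where
  "uniform01 \<equiv> uniform_measure lborel {0..1}"

lemma real_distribution_uniform01: "real_distribution uniform01"
  unfolding real_distribution_def real_distribution_axioms_def
  by (auto intro!: prob_space_uniform_measure simp: emeasure_lborel_Icc_eq)

lemma cdf_uniform01: "cdf uniform01 u = max 0 (min 1 u)"
proof -
  have "cdf uniform01 u = measure lborel ({0..1} \<inter> {..u}) / measure lborel {0..1::real}"
    unfolding cdf_def by (subst measure_uniform_measure) (auto simp: emeasure_lborel_Icc_eq)
  moreover have "{0..1} \<inter> {..u} = {0..min 1 u}" by auto
  ultimately show ?thesis by auto
qed

context real_distribution
begin

lemma borel_measurable_cdf [measurable]: "cdf M \<in> borel_measurable borel"
  by (rule borel_measurable_mono) (auto intro: monoI cdf_nondecreasing)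

lemma cdf_le_eq_atMost:
  assumes cont: "\<And>x. isCont (cdf M) x" and u: "u < 1" and ne: "{t. cdf M t \<le> u} \<noteq> {}"
  obtains t0 where "{t. cdf M t \<le> u} = {..t0}" "cdf M t0 = u"
proof -
  define S where "S = {t. cdf M t \<le> u}"
  have "eventually (\<lambda>t. u < cdf M t) at_top" using cdf_lim_at_top_prob u by (intro order_tendstoD) auto
  then obtain T where T: "\<And>t. t \<ge> T \<Longrightarrow> u < cdf M t" by (auto simp: eventually_at_top_linorder)
  have "t \<le> T" if "t \<in> S" for t using that T[of t] unfolding S_def by force
  then have bdd: "bdd_above S" unfolding bdd_above_def by blast
  have "continuous_on UNIV (cdf M)" using cont by (simp add: continuous_on_eq_continuous_at)
  then have "closed S" unfolding S_def by (intro closed_Collect_le continuous_on_const)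
  then have t0: "Sup S \<in> S" using closed_contains_Sup[OF _ bdd] ne by (simp add: S_def)
  have S_eq: "S = {..Sup S}"
  proof
    show "S \<subseteq> {..Sup S}" using bdd by (auto intro: cSup_upper)
    show "{..Sup S} \<subseteq> S"
    proof
      fix t assume "t \<in> {..Sup S}"
      then have "cdf M t \<le> cdf M (Sup S)" by (simp add: cdf_nondecreasing)
      with t0 show "t \<in> S" unfolding S_def by simp
    qed
  qed
  have "cdf M (Sup S) = u"
  proof (rule ccontr)
    assume "cdf M (Sup S) \<noteq> u"
    with t0 have "cdf M (Sup S) < u" unfolding S_def by simp
    moreover have "(cdf M \<longlongrightarrow> cdf M (Sup S)) (at_right (Sup S))"
      using cont[of "Sup S"] by (simp add: continuous_at filterlim_at_split)
    ultimately have "eventually (\<lambda>t. cdf M t < u) (at_right (Sup S))" by (simp add: order_tendstoD)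
    then obtain b where b: "b > Sup S" "\<And>y. Sup S < y \<Longrightarrow> y < b \<Longrightarrow> cdf M y < u"
      unfolding eventually_at_right_field by blast
    then have "cdf M ((Sup S + b) / 2) < u" by (intro b(2)) auto
    then have "(Sup S + b) / 2 \<in> S" by (simp add: S_def)
    then have "(Sup S + b) / 2 \<le> Sup S" using bdd by (rule cSup_upper)
    with b(1) show False by simp
  qed
  with S_eq that show ?thesis unfolding S_def by blast
qed

lemma measure_cdf_le:
  assumes cont: "\<And>x. isCont (cdf M) x" and u: "0 \<le> u" "u < 1"
  shows "measure M {t. cdf M t \<le> u} = u"
proof (cases "{t. cdf M t \<le> u} = {}")
  case True
  have "\<not> 0 < u"
  proof
    assume "0 < u"
    then have "eventually (\<lambda>t. cdf M t < u) at_bot" using cdf_lim_at_bot by (rule order_tendstoD(2)[rotated])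
    then obtain t where "cdf M t < u" by (auto simp: eventually_at_bot_linorder)
    with True show False by (force dest: less_imp_le)
  qed
  with True u show ?thesis by simp
next
  case False
  then obtain t0 where "{t. cdf M t \<le> u} = {..t0}" "cdf M t0 = u" using cdf_le_eq_atMost[OF cont u(2)] by blast
  then show ?thesis by (simp add: cdf_def)
qed

lemma distr_cdf_eq_uniform01:
  assumes cont: "\<And>x. isCont (cdf M) x"
  shows "distr M borel (cdf M) = uniform01"
proof (rule cdf_unique)
  have measurable_cdf: "cdf M \<in> borel_measurable M"
    unfolding measurable_cong_sets[OF events_eq_borel refl] by (rule borel_measurable_cdf)
  then show "real_distribution (distr M borel (cdf M))" by (rule real_distribution_distr)
  show "real_distribution uniform01" by (rule real_distribution_uniform01)
  show "cdf (distr M borel (cdf M)) = cdf uniform01"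
  proof
    fix u
    have "cdf (distr M borel (cdf M)) u = measure M {t. cdf M t \<le> u}"
      unfolding cdf_def2[of "distr M borel (cdf M)"] using measurable_cdf
      by (subst measure_distr) (auto simp: vimage_def)
    also have "\<dots> = max 0 (min 1 u)"
    proof -
      consider "u < 0" | "0 \<le> u" "u < 1" | "1 \<le> u" by linarith
      then show ?thesis
      proof cases
        case 1
        then have "{t. cdf M t \<le> u} = {}" using cdf_nonneg by (auto simp: not_le intro: less_le_trans)
        with 1 show ?thesis by simp
      next
        case 2
        then show ?thesis using measure_cdf_le[OF cont] by simp
      next
        case 3
        then have "{t. cdf M t \<le> u} = UNIV" using cdf_bounded_prob by (auto intro: order_trans)
        with 3 show ?thesis using prob_space by simp
      qed
    qed
    finally show "cdf (distr M borel (cdf M)) u = cdf uniform01 u" by (simp add: cdf_uniform01)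
  qed
qed

end

lemma has_integral_one_minus_powr:
  fixes c :: real assumes c: "c > 0"
  shows "((\<lambda>u. (1 - u) powr c) has_integral (1 / (c + 1))) {0..1}"
proof -
  define F where "F u = - (1 / (c + 1)) * (1 - u) powr (c + 1)" for u :: real
  have "((\<lambda>u. (1 - u) powr c) has_integral (F 1 - F 0)) {0..1}"
  proof (rule fundamental_theorem_of_calculus_interior)
    show "continuous_on {0..1} F" unfolding F_def
      by (intro continuous_intros continuous_on_powr') (use c in \<open>auto intro: continuous_intros\<close>)
  next
    fix x :: real assume x: "x \<in> {0<..<1}"
    have "((\<lambda>u. (1 - u) powr (c + 1)) has_real_derivative (c + 1) * (1 - x) powr (c + 1 - 1) * - 1) (at x)"
      using x by (intro DERIV_chain2[OF has_real_derivative_powr]) (auto intro!: derivative_eq_intros)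
    then have "(F has_real_derivative - (1 / (c + 1)) * ((c + 1) * (1 - x) powr (c + 1 - 1) * - 1)) (at x)"
      unfolding F_def by (rule DERIV_cmult)
    moreover have "- (1 / (c + 1)) * ((c + 1) * (1 - x) powr (c + 1 - 1) * - 1) = (1 - x) powr c"
      using c by (simp add: field_simps)
    ultimately show "(F has_vector_derivative (1 - x) powr c) (at x)"
      by (simp add: has_real_derivative_iff_has_vector_derivative)
  qed simp
  then show ?thesis by (simp add: F_def)
qed

lemma integral_uniform01_one_minus_powr:
  fixes c :: real assumes c: "c > 0"
  shows "(\<integral>u. (1 - u) powr c \<partial>uniform01) = 1 / (c + 1)"
proof -
  have "(\<integral>\<^sup>+u. ennreal ((1 - u) powr c) \<partial>uniform01)
      = (\<integral>\<^sup>+u. ennreal ((1 - u) powr c) * indicator {0..1} u \<partial>lborel) / emeasure lborel {0..1::real}"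
    by (rule nn_integral_uniform_measure) auto
  also have "(\<integral>\<^sup>+u. ennreal ((1 - u) powr c) * indicator {0..1} u \<partial>lborel)
      = (\<integral>\<^sup>+u. ennreal (indicator {0..1} u * (1 - u) powr c) \<partial>lborel)"
    by (intro nn_integral_cong) (auto split: split_indicator)
  also have "\<dots> = ennreal (1 / (c + 1))"
    using nn_integral_has_integral_lebesgue[OF _ has_integral_one_minus_powr[OF c]] by simp
  finally have "(\<integral>\<^sup>+u. ennreal ((1 - u) powr c) \<partial>uniform01) = ennreal (1 / (c + 1))"
    by (simp add: emeasure_lborel_Icc_eq divide_ennreal_def)
  then show ?thesis using c by (subst integral_eq_nn_integral) auto
qed

abbreviation normal0 :: "real \<Rightarrow> real measure" where
  "normal0 \<sigma> \<equiv> density lborel (\<lambda>s. ennreal (normal_density 0 \<sigma> s))"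

lemma real_distribution_normal0: "\<sigma> > 0 \<Longrightarrow> real_distribution (normal0 \<sigma>)"
  unfolding real_distribution_def real_distribution_axioms_def using prob_space_normal_density by auto

lemma Phi_eq_cdf: "Phi \<sigma> = cdf (normal0 \<sigma>)"
  unfolding Phi_def cdf_def by simp

lemma isCont_Phi:
  assumes "\<sigma> > 0" shows "isCont (Phi \<sigma>) x"
proof -
  interpret real_distribution "normal0 \<sigma>" by (rule real_distribution_normal0[OF assms])
  have "AE y in lborel. y \<in> {x} \<longrightarrow> ennreal (normal_density 0 \<sigma> y) = 0"
    by (rule AE_I'[of "{x}"]) auto
  then have "{x} \<in> null_sets (normal0 \<sigma>)" by (subst null_sets_density_iff) auto
  then show ?thesis unfolding Phi_eq_cdf by (simp add: isCont_cdf measure_eq_0_null_sets)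
qed

lemma Phi_bounds:
  assumes "\<sigma> > 0" shows "0 \<le> Phi \<sigma> t" "Phi \<sigma> t \<le> 1"
proof -
  interpret real_distribution "normal0 \<sigma>" by (rule real_distribution_normal0[OF assms])
  show "0 \<le> Phi \<sigma> t" "Phi \<sigma> t \<le> 1" unfolding Phi_eq_cdf by (rule cdf_nonneg, rule cdf_bounded_prob)
qed

lemma integral_normal0_one_minus_Phi_powr:
  fixes c :: real assumes c: "c > 0" and \<sigma>: "\<sigma> > 0"
  shows "(\<integral>t. (1 - Phi \<sigma> t) powr c \<partial>normal0 \<sigma>) = 1 / (c + 1)"
proof -
  interpret real_distribution "normal0 \<sigma>" by (rule real_distribution_normal0[OF \<sigma>])
  have "(\<integral>t. (1 - Phi \<sigma> t) powr c \<partial>normal0 \<sigma>) = (\<integral>u. (1 - u) powr c \<partial>distr (normal0 \<sigma>) borel (Phi \<sigma>))"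
    unfolding Phi_eq_cdf by (subst integral_distr) auto
  also have "\<dots> = 1 / (c + 1)"
    using distr_cdf_eq_uniform01 isCont_Phi[OF \<sigma>] integral_uniform01_one_minus_powr[OF c]
    by (simp add: Phi_eq_cdf)
  finally show ?thesis .
qed

definition beta_of_normal :: "real \<Rightarrow> real \<Rightarrow> real \<Rightarrow> real" where
  "beta_of_normal M \<sigma> z = Beta_inv_cdf M (Phi \<sigma> z)"

lemma beta_of_normal_bounds:
  assumes "M > 0" "\<sigma> > 0"
  shows "0 \<le> beta_of_normal M \<sigma> z \<and> beta_of_normal M \<sigma> z \<le> 1"
proof -
  have "(1 - Phi \<sigma> z) powr (1 / M) \<le> 1" using assms Phi_bounds[OF assms(2), of z] by (intro powr_le1) auto
  then show ?thesis unfolding beta_of_normal_def Beta_inv_cdf_def by simp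
qed

lemma continuous_on_beta_of_normal:
  assumes "M > 0" "\<sigma> > 0"
  shows "continuous_on UNIV (beta_of_normal M \<sigma>)"
  unfolding beta_of_normal_def[abs_def] Beta_inv_cdf_def
  using assms isCont_Phi[OF assms(2)] Phi_bounds[OF assms(2)]
  by (intro continuous_intros continuous_on_powr') (auto simp: continuous_on_eq_continuous_at)

lemma one_minus_beta_of_normal_power:
  assumes "k \<ge> 1"
  shows "(1 - beta_of_normal M \<sigma> z) ^ k = (1 - Phi \<sigma> z) powr (real k / M)"
proof (cases "1 - Phi \<sigma> z = 0")
  case True
  then show ?thesis using assms by (simp add: beta_of_normal_def Beta_inv_cdf_def power_0_left)
next
  case False
  then show ?thesis by (simp add: beta_of_normal_def Beta_inv_cdf_def powr_power)
qed

lemma (in prob_space) integral_one_minus_beta_of_normal_power: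
  assumes [measurable]: "X \<in> borel_measurable M" and X: "distr M borel X = normal0 \<sigma>"
    and \<alpha>: "\<alpha> > 0" and \<sigma>: "\<sigma> > 0" and k: "k \<ge> 1"
  shows "(\<integral>\<omega>. (1 - beta_of_normal \<alpha> \<sigma> (X \<omega>)) ^ k \<partial>M) = \<alpha> / (\<alpha> + k)"
proof -
  have [measurable]: "beta_of_normal \<alpha> \<sigma> \<in> borel_measurable borel"
    by (rule borel_measurable_continuous_onI[OF continuous_on_beta_of_normal[OF \<alpha> \<sigma>]])
  have [measurable]: "Phi \<sigma> \<in> borel_measurable borel"
    using isCont_Phi[OF \<sigma>] by (intro borel_measurable_continuous_onI) (simp add: continuous_on_eq_continuous_at)
  have "(\<integral>\<omega>. (1 - beta_of_normal \<alpha> \<sigma> (X \<omega>)) ^ k \<partial>M) = (\<integral>t. (1 - Phi \<sigma> t) powr (k / \<alpha>) \<partial>normal0 \<sigma>)"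
    unfolding X[symmetric] using k by (subst integral_distr) (auto simp: one_minus_beta_of_normal_power)
  also have "\<dots> = \<alpha> / (\<alpha> + k)"
    using k \<alpha> \<sigma> by (subst integral_normal0_one_minus_Phi_powr) (auto simp: field_simps)
  finally show ?thesis .
qed

section \<open>Squared stick-breaking weights\<close>

text \<open>The square of the \<open>j\<close>-th stick-breaking weight is the product over the sticks \<open>l\<close> of
  \<open>(1 - v l)\<^sup>2\<close> for \<open>l < j\<close>, \<open>(v j)\<^sup>2\<close> for \<open>l = j\<close>, and \<open>1\<close> for \<open>l > j\<close>; the index \<open>sq_index j l\<close>
  (\<open>2\<close>, \<open>1\<close> or \<open>0\<close>) selects the factor.\<close>
definition sq_factor :: "nat \<Rightarrow> real \<Rightarrow> real" where
  "sq_factor c t = (if c = 0 then 1 else if c = 1 then t\<^sup>2 else (1 - t)\<^sup>2)"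

definition sq_index :: "nat \<Rightarrow> nat \<Rightarrow> nat" where
  "sq_index j l = (if l < j then 2 else if l = j then 1 else 0)"

lemma sq_index_simps [simp]:
  "sq_index (Suc j) (Suc l) = sq_index j l" "sq_index (Suc j) 0 = 2"
  "sq_index 0 0 = 1" "sq_index 0 (Suc l) = 0"
  by (simp_all add: sq_index_def)

lemma sq_factor_0 [simp]: "sq_factor 0 t = 1"
  by (simp add: sq_factor_def)

lemma sq_factor_bounds: "0 \<le> t \<Longrightarrow> t \<le> 1 \<Longrightarrow> 0 \<le> sq_factor c t \<and> sq_factor c t \<le> 1"
  unfolding sq_factor_def by (auto simp: power_le_one)

lemma continuous_on_sq_factor: "continuous_on UNIV (sq_factor c)"
  unfolding sq_factor_def by (cases "c = 0"; cases "c = 1") (auto intro!: continuous_intros)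

lemma borel_measurable_sq_factor [measurable]: "sq_factor c \<in> borel_measurable borel"
  by (rule borel_measurable_continuous_onI[OF continuous_on_sq_factor])

lemma stick_sq_eq_prod:
  assumes "j < n"
  shows "(stick v j)\<^sup>2 = (\<Prod>l<n. sq_factor (sq_index j l) (v l))"
proof -
  from assms have "Suc j \<le> n" by simp
  then show ?thesis
  proof (induct n rule: dec_induct)
    case base
    have "(\<Prod>l<j. sq_factor (sq_index j l) (v l)) = (\<Prod>l<j. (1 - v l)\<^sup>2)"
      by (rule prod.cong) (auto simp: sq_index_def sq_factor_def)
    then show ?case by (simp add: stick_def sq_index_def sq_factor_def power_mult_distrib prod_power_distrib)
  next
    case (step n)
    then show ?case by (simp add: sq_index_def)
  qed
qed

lemma sum_stick_lessThan: "(\<Sum>j<n. stick v j) = 1 - (\<Prod>l<n. 1 - v l)"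
  by (induct n) (auto simp: stick_def algebra_simps)

lemma stick_sq_bounds:
  assumes v: "\<And>l. 0 \<le> v l \<and> v l \<le> 1"
  shows "summable (\<lambda>j. (stick v j)\<^sup>2)" "0 \<le> (\<Sum>j. (stick v j)\<^sup>2)" "(\<Sum>j. (stick v j)\<^sup>2) \<le> 1"
    and "(stick v j)\<^sup>2 \<le> 1"
proof -
  have nonneg: "0 \<le> stick v j" for j unfolding stick_def using v by (intro mult_nonneg_nonneg prod_nonneg) auto
  have partial: "(\<Sum>j<n. stick v j) \<le> 1" for n
    unfolding sum_stick_lessThan using v by (simp add: prod_nonneg)
  have le_1: "stick v j \<le> 1" for j
    using partial[of "Suc j"] sum_nonneg[of "{..<j}" "stick v"] nonneg by simp
  have sq_le: "(stick v j)\<^sup>2 \<le> stick v j" for j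
    using nonneg[of j] le_1[of j] by (simp add: power2_eq_square mult_left_le)
  have partial_sq: "(\<Sum>j<n. (stick v j)\<^sup>2) \<le> 1" for n
    using partial[of n] sum_mono[of "{..<n}" "\<lambda>j. (stick v j)\<^sup>2" "stick v", OF sq_le] by simp
  show summable: "summable (\<lambda>j. (stick v j)\<^sup>2)" by (rule summableI_nonneg_bounded[OF _ partial_sq]) simp
  show "0 \<le> (\<Sum>j. (stick v j)\<^sup>2)" by (rule suminf_nonneg[OF summable]) simp
  show "(\<Sum>j. (stick v j)\<^sup>2) \<le> 1" by (rule suminf_le_const[OF summable partial_sq])
  show "(stick v j)\<^sup>2 \<le> 1" using sq_le[of j] le_1[of j] by linarith
qed

text \<open>\<open>sq_weight_moment m j k\<close> is \<open>E (p\<^sub>j(x\<^sub>1)\<^sup>2 p\<^sub>k(x\<^sub>2)\<^sup>2)\<close> when the sticks are i.i.d. and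
  \<open>m a b\<close> is the expectation of the product of factors \<open>sq_factor a\<close> and \<open>sq_factor b\<close> of one stick.\<close>
definition sq_weight_moment :: "(nat \<Rightarrow> nat \<Rightarrow> real) \<Rightarrow> nat \<Rightarrow> nat \<Rightarrow> real" where
  "sq_weight_moment m j k = (\<Prod>l<Suc (max j k). m (sq_index j l) (sq_index k l))"

lemma prod_sq_index_left: "(\<Prod>l<Suc k. m (sq_index k l) 0) = m 2 0 ^ k * m 1 0"
  by (induct k) (simp_all only: prod.lessThan_Suc_shift sq_index_simps power_Suc mult.assoc, simp)

lemma prod_sq_index_right: "(\<Prod>l<Suc k. m 0 (sq_index k l)) = m 0 2 ^ k * m 0 1"
  by (induct k) (simp_all only: prod.lessThan_Suc_shift sq_index_simps power_Suc mult.assoc, simp)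

lemma sq_weight_moment_simps:
  shows "sq_weight_moment m 0 0 = m 1 1"
    and "sq_weight_moment m (Suc j) (Suc k) = m 2 2 * sq_weight_moment m j k"
    and "sq_weight_moment m 0 (Suc k) = m 1 2 * (m 0 2 ^ k * m 0 1)"
    and "sq_weight_moment m (Suc j) 0 = m 2 1 * (m 2 0 ^ j * m 1 0)"
proof -
  show "sq_weight_moment m 0 0 = m 1 1" by (simp add: sq_weight_moment_def)
  show "sq_weight_moment m (Suc j) (Suc k) = m 2 2 * sq_weight_moment m j k"
    unfolding sq_weight_moment_def by (simp only: max_Suc_Suc prod.lessThan_Suc_shift sq_index_simps)
  have "sq_weight_moment m 0 (Suc k) = m 1 2 * (\<Prod>l<Suc k. m 0 (sq_index k l))"
    unfolding sq_weight_moment_def by (simp only: max_0L prod.lessThan_Suc_shift sq_index_simps)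
  then show "sq_weight_moment m 0 (Suc k) = m 1 2 * (m 0 2 ^ k * m 0 1)"
    by (simp only: prod_sq_index_right)
  have "sq_weight_moment m (Suc j) 0 = m 2 1 * (\<Prod>l<Suc j. m (sq_index j l) 0)"
    unfolding sq_weight_moment_def by (simp only: max_0R prod.lessThan_Suc_shift sq_index_simps)
  then show "sq_weight_moment m (Suc j) 0 = m 2 1 * (m 2 0 ^ j * m 1 0)"
    by (simp only: prod_sq_index_left)
qed

lemma ennreal_suminf_split_head: "(suminf f :: ennreal) = f 0 + (\<Sum>j. f (Suc j))"
  using suminf_offset[of f 1] by (simp add: add.commute)

lemma suminf_ennreal_geometric:
  fixes c q :: real assumes "0 \<le> c" "0 \<le> q" "q < 1"
  shows "(\<Sum>k. ennreal (c * q ^ k)) = ennreal (c / (1 - q))"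
proof -
  have "summable (\<lambda>k. c * q ^ k)" using assms by (intro summable_mult summable_geometric) auto
  moreover have "(\<Sum>k. c * q ^ k) = c / (1 - q)" using assms by (simp add: suminf_mult suminf_geometric)
  ultimately show ?thesis using assms by (subst suminf_ennreal2) auto
qed

lemma sq_weight_moment_nonneg: "(\<And>a b. 0 \<le> m a b) \<Longrightarrow> 0 \<le> sq_weight_moment m j k"
  unfolding sq_weight_moment_def by (intro prod_nonneg) auto

lemma suminf_sq_weight_moment_0:
  assumes nonneg: "\<And>a b. 0 \<le> m a b" and "m 0 2 < 1"
  shows "(\<Sum>k. ennreal (sq_weight_moment m 0 k)) = ennreal (m 1 1 + m 1 2 * m 0 1 / (1 - m 0 2))"
proof -
  have "(\<Sum>k. ennreal (sq_weight_moment m 0 (Suc k))) = (\<Sum>k. ennreal ((m 1 2 * m 0 1) * m 0 2 ^ k))"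
    by (simp only: sq_weight_moment_simps mult_ac)
  also have "\<dots> = ennreal (m 1 2 * m 0 1 / (1 - m 0 2))"
    using assms by (intro suminf_ennreal_geometric) auto
  finally show ?thesis using assms
    by (subst ennreal_suminf_split_head) (simp add: sq_weight_moment_simps ennreal_plus)
qed

lemma suminf_sq_weight_moment_Suc_0:
  assumes "\<And>a b. 0 \<le> m a b" and "m 2 0 < 1"
  shows "(\<Sum>j. ennreal (sq_weight_moment m (Suc j) 0)) = ennreal (m 2 1 * m 1 0 / (1 - m 2 0))"
proof -
  have "(\<Sum>j. ennreal (sq_weight_moment m (Suc j) 0)) = (\<Sum>j. ennreal ((m 2 1 * m 1 0) * m 2 0 ^ j))"
    by (simp only: sq_weight_moment_simps mult_ac)
  also have "\<dots> = ennreal (m 2 1 * m 1 0 / (1 - m 2 0))" using assms by (intro suminf_ennreal_geometric) auto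
  finally show ?thesis .
qed

lemma suminf_sq_weight_moment_Suc:
  assumes "\<And>a b. 0 \<le> m a b"
  shows "(\<Sum>k. ennreal (sq_weight_moment m (Suc j) k))
    = ennreal (sq_weight_moment m (Suc j) 0) + ennreal (m 2 2) * (\<Sum>k. ennreal (sq_weight_moment m j k))"
proof -
  have "(\<Sum>k. ennreal (sq_weight_moment m (Suc j) (Suc k))) = (\<Sum>k. ennreal (m 2 2) * ennreal (sq_weight_moment m j k))"
    using assms sq_weight_moment_nonneg[OF assms] by (simp only: sq_weight_moment_simps ennreal_mult)
  then show ?thesis by (subst ennreal_suminf_split_head) (simp only: ennreal_suminf_cmult)
qed

text \<open>Splitting off the first row and column leaves \<open>m 2 2\<close> times the whole double series, so
  its (finite) value solves a linear equation.\<close>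
lemma suminf_suminf_sq_weight_moment:
  fixes m :: "nat \<Rightarrow> nat \<Rightarrow> real"
  assumes nonneg: "\<And>a b. 0 \<le> m a b" and lt1: "m 2 2 < 1" "m 0 2 < 1" "m 2 0 < 1"
    and finite: "(\<Sum>j. \<Sum>k. ennreal (sq_weight_moment m j k)) \<noteq> \<top>"
  shows "(\<Sum>j. \<Sum>k. ennreal (sq_weight_moment m j k)) =
    ennreal ((m 1 1 + m 1 2 * m 0 1 / (1 - m 0 2) + m 2 1 * m 1 0 / (1 - m 2 0)) / (1 - m 2 2))"
proof -
  define r where "r = m 1 1 + m 1 2 * m 0 1 / (1 - m 0 2)"
  define c where "c = m 2 1 * m 1 0 / (1 - m 2 0)"
  have r: "0 \<le> r" and c: "0 \<le> c" unfolding r_def c_def using nonneg lt1 by auto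
  obtain d where d: "(\<Sum>j. \<Sum>k. ennreal (sq_weight_moment m j k)) = ennreal d" "0 \<le> d"
    using finite by (cases "\<Sum>j. \<Sum>k. ennreal (sq_weight_moment m j k)") auto
  have "ennreal d = (\<Sum>k. ennreal (sq_weight_moment m 0 k)) + (\<Sum>j. \<Sum>k. ennreal (sq_weight_moment m (Suc j) k))"
    unfolding d(1)[symmetric] by (rule ennreal_suminf_split_head)
  also have "\<dots> = ennreal r + ((\<Sum>j. ennreal (sq_weight_moment m (Suc j) 0))
      + (\<Sum>j. ennreal (m 2 2) * (\<Sum>k. ennreal (sq_weight_moment m j k))))"
    unfolding suminf_sq_weight_moment_0[of m, OF nonneg lt1(2)] suminf_sq_weight_moment_Suc[of m, OF nonneg] r_def
    by (subst suminf_add) auto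
  also have "\<dots> = ennreal r + (ennreal c + ennreal (m 2 2) * ennreal d)"
    unfolding suminf_sq_weight_moment_Suc_0[of m, OF nonneg lt1(3)] ennreal_suminf_cmult d(1) c_def ..
  also have "\<dots> = ennreal (r + c + m 2 2 * d)"
    using r c d(2) nonneg[of 2 2] by (simp add: ennreal_mult ennreal_plus add.assoc)
  finally have "d = r + c + m 2 2 * d" using r c d(2) nonneg[of 2 2] by (subst (asm) ennreal_inj) auto
  then have "d = (r + c) / (1 - m 2 2)" using lt1 by (simp add: field_simps)
  then show ?thesis using d unfolding r_def c_def by simp
qed

lemma ennreal_suminf_mult_suminf:
  fixes a b :: "nat \<Rightarrow> real"
  assumes "summable a" "summable b" "\<And>j. 0 \<le> a j" "\<And>k. 0 \<le> b k"
  shows "ennreal ((\<Sum>j. a j) * (\<Sum>k. b k)) = (\<Sum>j. \<Sum>k. ennreal (a j * b k))"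
proof -
  have "ennreal ((\<Sum>j. a j) * (\<Sum>k. b k)) = (\<Sum>j. ennreal (a j * (\<Sum>k. b k)))"
    using assms summable_mult2[OF assms(1)] suminf_nonneg[OF assms(2)]
    by (simp add: suminf_mult2[OF assms(1)] suminf_ennreal2)
  also have "\<dots> = (\<Sum>j. \<Sum>k. ennreal (a j * b k))"
    using assms summable_mult[OF assms(2)] by (simp add: suminf_mult[symmetric] suminf_ennreal2)
  finally show ?thesis .
qed

context prob_space
begin

lemma integral_suminf_geometric:
  fixes f :: "nat \<Rightarrow> 'a \<Rightarrow> real"
  assumes [measurable]: "\<And>j. f j \<in> borel_measurable M" and f: "\<And>j \<omega>. 0 \<le> f j \<omega> \<and> f j \<omega> \<le> 1"
    and summable: "\<And>\<omega>. summable (\<lambda>j. f j \<omega>)" and moments: "\<And>j. (\<integral>\<omega>. f j \<omega> \<partial>M) = c * q ^ j"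
    and cq: "0 \<le> c" "0 \<le> q" "q < 1"
  shows "(\<integral>\<omega>. (\<Sum>j. f j \<omega>) \<partial>M) = c / (1 - q)"
proof -
  have "summable (\<lambda>j. c * q ^ j)" using cq by (intro summable_mult summable_geometric) auto
  then have "(\<integral>\<omega>. (\<Sum>j. f j \<omega>) \<partial>M) = (\<Sum>j. \<integral>\<omega>. f j \<omega> \<partial>M)"
    using f summable moments
    by (intro integral_suminf) (auto intro!: integrable_const_bound[where B = 1] simp: abs_of_nonneg)
  also have "\<dots> = c / (1 - q)" using cq by (simp add: moments suminf_mult suminf_geometric)
  finally show ?thesis .
qed

lemma integral_suminf_stick_sq:
  fixes v :: "nat \<Rightarrow> 'a \<Rightarrow> real" and \<mu> :: "nat \<Rightarrow> real"
  assumes [measurable]: "\<And>l. v l \<in> borel_measurable M" and v: "\<And>l \<omega>. 0 \<le> v l \<omega> \<and> v l \<omega> \<le> 1"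
    and factors: "\<And>n a. (\<integral>\<omega>. (\<Prod>l<n. sq_factor (a l) (v l \<omega>)) \<partial>M) = (\<Prod>l<n. \<mu> (a l))"
    and \<mu>: "0 \<le> \<mu> 1" "0 \<le> \<mu> 2" "\<mu> 2 < 1"
  shows "(\<integral>\<omega>. (\<Sum>j. (stick (\<lambda>l. v l \<omega>) j)\<^sup>2) \<partial>M) = \<mu> 1 / (1 - \<mu> 2)"
proof (rule integral_suminf_geometric)
  show "(\<lambda>\<omega>. (stick (\<lambda>l. v l \<omega>) j)\<^sup>2) \<in> borel_measurable M" for j
    unfolding stick_def by measurable
  show "0 \<le> (stick (\<lambda>l. v l \<omega>) j)\<^sup>2 \<and> (stick (\<lambda>l. v l \<omega>) j)\<^sup>2 \<le> 1"
    "summable (\<lambda>j. (stick (\<lambda>l. v l \<omega>) j)\<^sup>2)" for j \<omega>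
    using stick_sq_bounds[of "\<lambda>l. v l \<omega>", OF v] by auto
  have "(\<integral>\<omega>. (stick (\<lambda>l. v l \<omega>) j)\<^sup>2 \<partial>M) = (\<Prod>l<Suc j. \<mu> (sq_index j l))" for j
    unfolding stick_sq_eq_prod[OF lessI] by (rule factors)
  then show "(\<integral>\<omega>. (stick (\<lambda>l. v l \<omega>) j)\<^sup>2 \<partial>M) = \<mu> 1 * \<mu> 2 ^ j" for j
    using prod_sq_index_left[of "\<lambda>a b. \<mu> a" j] by simp
qed (use \<mu> in auto)

lemma nn_integral_suminf_stick_sq_mult:
  fixes v w :: "nat \<Rightarrow> 'a \<Rightarrow> real"
  assumes [measurable]: "\<And>l. v l \<in> borel_measurable M" "\<And>l. w l \<in> borel_measurable M"
    and v: "\<And>l \<omega>. 0 \<le> v l \<omega> \<and> v l \<omega> \<le> 1" and w: "\<And>l \<omega>. 0 \<le> w l \<omega> \<and> w l \<omega> \<le> 1"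
    and factors: "\<And>n a b. (\<integral>\<omega>. (\<Prod>l<n. sq_factor (a l) (v l \<omega>) * sq_factor (b l) (w l \<omega>)) \<partial>M)
      = (\<Prod>l<n. m (a l) (b l))"
  shows "(\<integral>\<^sup>+\<omega>. ennreal ((\<Sum>j. (stick (\<lambda>l. v l \<omega>) j)\<^sup>2) * (\<Sum>k. (stick (\<lambda>l. w l \<omega>) k)\<^sup>2)) \<partial>M)
    = (\<Sum>j. \<Sum>k. ennreal (sq_weight_moment m j k))"
proof -
  let ?a = "\<lambda>j \<omega>. (stick (\<lambda>l. v l \<omega>) j)\<^sup>2" and ?b = "\<lambda>k \<omega>. (stick (\<lambda>l. w l \<omega>) k)\<^sup>2"
  have [measurable]: "?a j \<in> borel_measurable M" "?b k \<in> borel_measurable M" for j k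
    unfolding stick_def by measurable
  note a = stick_sq_bounds[of "\<lambda>l. v l \<omega>" for \<omega>, OF v]
  note b = stick_sq_bounds[of "\<lambda>l. w l \<omega>" for \<omega>, OF w]
  have moment: "(\<integral>\<omega>. ?a j \<omega> * ?b k \<omega> \<partial>M) = sq_weight_moment m j k" for j k
  proof -
    have lt: "j < Suc (max j k)" "k < Suc (max j k)" by auto
    have "(\<lambda>\<omega>. ?a j \<omega> * ?b k \<omega>)
        = (\<lambda>\<omega>. \<Prod>l<Suc (max j k). sq_factor (sq_index j l) (v l \<omega>) * sq_factor (sq_index k l) (w l \<omega>))"
      by (simp only: stick_sq_eq_prod[OF lt(1)] stick_sq_eq_prod[OF lt(2)] prod.distrib)
    then show ?thesis unfolding sq_weight_moment_def by (simp only: factors)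
  qed
  have "(\<integral>\<^sup>+\<omega>. ennreal ((\<Sum>j. ?a j \<omega>) * (\<Sum>k. ?b k \<omega>)) \<partial>M) = (\<integral>\<^sup>+\<omega>. (\<Sum>j. \<Sum>k. ennreal (?a j \<omega> * ?b k \<omega>)) \<partial>M)"
    using a b by (intro nn_integral_cong ennreal_suminf_mult_suminf) auto
  also have "\<dots> = (\<Sum>j. \<Sum>k. \<integral>\<^sup>+\<omega>. ennreal (?a j \<omega> * ?b k \<omega>) \<partial>M)"
    by (simp add: nn_integral_suminf)
  also have "\<dots> = (\<Sum>j. \<Sum>k. ennreal (sq_weight_moment m j k))"
    using a b by (simp add: nn_integral_eq_integral integrable_const_bound[where B = 1] abs_mult mult_le_one
        moment[symmetric])
  finally show ?thesis .
qed

lemma integral_suminf_stick_sq_mult: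
  fixes v w :: "nat \<Rightarrow> 'a \<Rightarrow> real"
  assumes [measurable]: "\<And>l. v l \<in> borel_measurable M" "\<And>l. w l \<in> borel_measurable M"
    and v: "\<And>l \<omega>. 0 \<le> v l \<omega> \<and> v l \<omega> \<le> 1" and w: "\<And>l \<omega>. 0 \<le> w l \<omega> \<and> w l \<omega> \<le> 1"
    and factors: "\<And>n a b. (\<integral>\<omega>. (\<Prod>l<n. sq_factor (a l) (v l \<omega>) * sq_factor (b l) (w l \<omega>)) \<partial>M)
      = (\<Prod>l<n. m (a l) (b l))"
    and nonneg: "\<And>a b. 0 \<le> m a b" and lt1: "m 2 2 < 1" "m 0 2 < 1" "m 2 0 < 1"
  shows "(\<integral>\<omega>. (\<Sum>j. (stick (\<lambda>l. v l \<omega>) j)\<^sup>2) * (\<Sum>k. (stick (\<lambda>l. w l \<omega>) k)\<^sup>2) \<partial>M)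
    = (m 1 1 + m 1 2 * m 0 1 / (1 - m 0 2) + m 2 1 * m 1 0 / (1 - m 2 0)) / (1 - m 2 2)"
proof -
  let ?A = "\<lambda>\<omega>. (\<Sum>j. (stick (\<lambda>l. v l \<omega>) j)\<^sup>2) * (\<Sum>k. (stick (\<lambda>l. w l \<omega>) k)\<^sup>2)"
  note nn = nn_integral_suminf_stick_sq_mult[OF assms(1-5)]
  have [measurable]: "?A \<in> borel_measurable M" unfolding stick_def by measurable
  have A: "0 \<le> ?A \<omega>" "?A \<omega> \<le> 1" for \<omega>
    using stick_sq_bounds(2,3)[of "\<lambda>l. v l \<omega>", OF v] stick_sq_bounds(2,3)[of "\<lambda>l. w l \<omega>", OF w]
    by (auto intro: mult_le_one)
  have "(\<integral>\<^sup>+\<omega>. ennreal (?A \<omega>) \<partial>M) \<le> (\<integral>\<^sup>+\<omega>. 1 \<partial>M)" using A by (intro nn_integral_mono) auto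
  then have "(\<Sum>j. \<Sum>k. ennreal (sq_weight_moment m j k)) \<noteq> \<top>"
    unfolding nn by (auto simp: emeasure_space_1 top_unique)
  note series_value = suminf_suminf_sq_weight_moment[OF nonneg lt1 this]
  have "0 \<le> (m 1 1 + m 1 2 * m 0 1 / (1 - m 0 2) + m 2 1 * m 1 0 / (1 - m 2 0)) / (1 - m 2 2)"
    using nonneg lt1 by auto
  then show ?thesis using A by (subst integral_eq_nn_integral) (auto simp: nn series_value)
qed

end

section \<open>Simpson diversity under the dependent GEM prior\<close>

lemma (in prob_space) integral_centered_mult:
  fixes X Y :: "'a \<Rightarrow> real"
  assumes [measurable]: "X \<in> borel_measurable M" "Y \<in> borel_measurable M"
    and "\<And>\<omega>. \<bar>X \<omega>\<bar> \<le> 1" "\<And>\<omega>. \<bar>Y \<omega>\<bar> \<le> 1"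
  shows "(\<integral>\<omega>. (X \<omega> - expectation X) * (Y \<omega> - expectation Y) \<partial>M)
    = (\<integral>\<omega>. X \<omega> * Y \<omega> \<partial>M) - expectation X * expectation Y"
proof -
  have "integrable M X" "integrable M Y" "integrable M (\<lambda>\<omega>. X \<omega> * Y \<omega>)"
    using assms by (auto intro!: integrable_const_bound[where B = 1] AE_I2 mult_le_one simp: abs_mult)
  moreover have "(\<lambda>\<omega>. (X \<omega> - expectation X) * (Y \<omega> - expectation Y)) =
      (\<lambda>\<omega>. X \<omega> * Y \<omega> + (- expectation Y) * X \<omega> + (- expectation X) * Y \<omega> + expectation X * expectation Y)"
    by (simp add: algebra_simps)
  ultimately show ?thesis by (simp add: prob_space)
qed

text \<open>\<open>beta_process j x\<close> is the paper's \<open>V\<^sub>j(x)\<close>, and \<open>concentration x\<close> below is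
  \<open>\<Sum>\<^sub>j p\<^sub>j(x)\<^sup>2 = 1 - H\<^sub>S\<^sub>i\<^sub>m\<^sub>p(x)\<close>.\<close>
locale dgem_prior = prob_space P for P :: "'a measure" +
  fixes S :: "real set" and M \<sigma> :: real and K :: "real \<Rightarrow> real"
    and Z :: "nat \<Rightarrow> real \<Rightarrow> 'a \<Rightarrow> real"
  assumes M_pos: "M > 0" and \<sigma>_pos: "\<sigma> > 0" and K_0: "K 0 = 1"
    and gaussian: "\<And>j. centered_gaussian_process P S (\<lambda>x1 x2. \<sigma>\<^sup>2 * K (x1 - x2)) (Z j)"
    and independent: "indep_vars (\<lambda>_. Pi\<^sub>M S (\<lambda>_. borel)) (\<lambda>j \<omega>. restrict (\<lambda>x. Z j x \<omega>) S) UNIV"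
begin

abbreviation beta_process :: "nat \<Rightarrow> real \<Rightarrow> 'a \<Rightarrow> real" where
  "beta_process j x \<omega> \<equiv> beta_of_normal M \<sigma> (Z j x \<omega>)"

lemma beta_process_range: "0 \<le> beta_process j x \<omega> \<and> beta_process j x \<omega> \<le> 1"
  using beta_of_normal_bounds[OF M_pos \<sigma>_pos] .

lemmas beta_process_bounds = beta_process_range[THEN conjunct1] beta_process_range[THEN conjunct2]

lemma borel_measurable_beta_of_normal [measurable]: "beta_of_normal M \<sigma> \<in> borel_measurable borel"
  by (rule borel_measurable_continuous_onI[OF continuous_on_beta_of_normal[OF M_pos \<sigma>_pos]])

lemma borel_measurable_Z [measurable (raw)]: "x \<in> S \<Longrightarrow> Z j x \<in> borel_measurable P"
  using gaussian unfolding centered_gaussian_process_def by auto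

lemma distr_linear_combination:
  assumes "x \<in> S" "y \<in> S"
  shows "distr P borel (\<lambda>\<omega>. a * Z j x \<omega> + b * Z j y \<omega>)
    = gauss_law (\<sigma>\<^sup>2 * (a\<^sup>2 + b\<^sup>2 + a * b * (K (x - y) + K (y - x))))"
proof -
  have "\<forall>(xs::real list) (cs::real list). length cs = length xs \<and> set xs \<subseteq> S \<longrightarrow>
      distr P borel (\<lambda>\<omega>. \<Sum>i<length xs. cs ! i * Z j (xs ! i) \<omega>) =
      gauss_law (\<Sum>i<length xs. \<Sum>k<length xs. cs ! i * cs ! k * (\<sigma>\<^sup>2 * K (xs ! i - xs ! k)))"
    using gaussian[of j] unfolding centered_gaussian_process_def by blast
  from this[rule_format, of "[a, b]" "[x, y]"] assms show ?thesis by (simp add: numeral_2_eq_2 K_0 power2_eq_square algebra_simps)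
qed

lemma distr_Z: "x \<in> S \<Longrightarrow> distr P borel (Z j x) = normal0 \<sigma>"
  using distr_linear_combination[of x x, where a = 1 and b = 0] \<sigma>_pos by (simp add: gauss_law_def)

lemma integral_one_minus_beta_process_power:
  "x \<in> S \<Longrightarrow> k \<ge> 1 \<Longrightarrow> (\<integral>\<omega>. (1 - beta_process j x \<omega>) ^ k \<partial>P) = M / (M + k)"
  using M_pos \<sigma>_pos by (intro integral_one_minus_beta_of_normal_power distr_Z) auto

lemma continuous_on_sq_factor_beta_of_normal: "continuous_on UNIV (\<lambda>t. sq_factor a (beta_of_normal M \<sigma> t))"
  by (rule continuous_on_compose2[OF continuous_on_sq_factor continuous_on_beta_of_normal[OF M_pos \<sigma>_pos]]) auto

lemma abs_sq_factor_beta_of_normal_le: "\<bar>sq_factor a (beta_of_normal M \<sigma> t)\<bar> \<le> 1"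
  using sq_factor_bounds[of "beta_of_normal M \<sigma> t"] beta_of_normal_bounds[OF M_pos \<sigma>_pos, of t] by auto

lemma integrable_sq_factor_beta_process [simp]:
  "x \<in> S \<Longrightarrow> y \<in> S \<Longrightarrow> integrable P (\<lambda>\<omega>. sq_factor a (beta_process j x \<omega>) * sq_factor b (beta_process l y \<omega>))"
  by (rule integrable_const_bound[where B = 1]) (auto simp: abs_mult intro!: mult_le_one abs_sq_factor_beta_of_normal_le)

text \<open>The joint law of \<open>(Z l x, Z l y)\<close> depends only on \<open>K (x - y) + K (y - x)\<close>.\<close>
lemma integral_sq_factors_eq:
  assumes xy: "x \<in> S" "y \<in> S" "x' \<in> S" "y' \<in> S" and K: "K (x - y) + K (y - x) = K (x' - y') + K (y' - x')"
  shows "(\<integral>\<omega>. sq_factor a (beta_process l x \<omega>) * sq_factor b (beta_process l y \<omega>) \<partial>P)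
    = (\<integral>\<omega>. sq_factor a (beta_process l' x' \<omega>) * sq_factor b (beta_process l' y' \<omega>) \<partial>P)"
  using xy K distr_linear_combination
  by (intro integral_product_eq_if_linear_laws_eq[where f = "\<lambda>t. sq_factor a (beta_of_normal M \<sigma> t)"
        and g = "\<lambda>t. sq_factor b (beta_of_normal M \<sigma> t)" and B = 1]
      continuous_on_sq_factor_beta_of_normal)
    (auto intro: abs_sq_factor_beta_of_normal_le)

definition mixed_moment :: "real \<Rightarrow> real \<Rightarrow> nat \<Rightarrow> nat \<Rightarrow> real" where
  "mixed_moment x1 x2 a b = (\<integral>\<omega>. sq_factor a (beta_process 0 x1 \<omega>) * sq_factor b (beta_process 0 x2 \<omega>) \<partial>P)"

lemma integral_prod_sq_factors:
  assumes x: "x1 \<in> S" "x2 \<in> S"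
  shows "(\<integral>\<omega>. (\<Prod>l<n. sq_factor (a l) (beta_process l x1 \<omega>) * sq_factor (b l) (beta_process l x2 \<omega>)) \<partial>P)
    = (\<Prod>l<n. mixed_moment x1 x2 (a l) (b l))"
proof -
  define G where "G l f = sq_factor (a l) (beta_of_normal M \<sigma> (f x1)) * sq_factor (b l) (beta_of_normal M \<sigma> (f x2))"
    for l and f :: "real \<Rightarrow> real"
  have "G l \<in> borel_measurable (Pi\<^sub>M S (\<lambda>_. borel))" for l
    unfolding G_def using x by measurable
  then have "indep_vars (\<lambda>_. borel) (\<lambda>l \<omega>. G l (restrict (\<lambda>x. Z l x \<omega>) S)) {..<n}"
    by (intro indep_vars_subset[OF indep_vars_compose2[OF independent]]) auto
  moreover have G: "G l (restrict (\<lambda>x. Z l x \<omega>) S)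
      = sq_factor (a l) (beta_process l x1 \<omega>) * sq_factor (b l) (beta_process l x2 \<omega>)" for l \<omega>
    unfolding G_def using x by simp
  ultimately have "(\<integral>\<omega>. (\<Prod>l<n. sq_factor (a l) (beta_process l x1 \<omega>) * sq_factor (b l) (beta_process l x2 \<omega>)) \<partial>P)
      = (\<Prod>l<n. \<integral>\<omega>. sq_factor (a l) (beta_process l x1 \<omega>) * sq_factor (b l) (beta_process l x2 \<omega>) \<partial>P)"
    using x by (subst indep_vars_lebesgue_integral) (auto simp: G)
  also have "\<dots> = (\<Prod>l<n. mixed_moment x1 x2 (a l) (b l))"
    unfolding mixed_moment_def using x by (intro prod.cong refl integral_sq_factors_eq) auto
  finally show ?thesis .
qed

lemma mixed_moment_nonneg: "0 \<le> mixed_moment x1 x2 a b"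
  unfolding mixed_moment_def using sq_factor_bounds[OF beta_process_bounds]
  by (intro integral_nonneg_AE AE_I2 mult_nonneg_nonneg) auto

lemma mixed_moment_2_1: "x1 \<in> S \<Longrightarrow> x2 \<in> S \<Longrightarrow> mixed_moment x1 x2 2 1 = mixed_moment x1 x2 1 2"
  unfolding mixed_moment_def by (subst mult.commute) (intro integral_sq_factors_eq; simp add: add.commute)

lemma integral_quartic_one_minus_beta_process:
  assumes "x \<in> S"
  shows "(\<integral>\<omega>. a + b * (1 - beta_process j x \<omega>) + c * (1 - beta_process j x \<omega>)\<^sup>2
      + d * (1 - beta_process j x \<omega>) ^ 3 + e * (1 - beta_process j x \<omega>) ^ 4 \<partial>P)
    = a + b * (M / (M + 1)) + c * (M / (M + 2)) + d * (M / (M + 3)) + e * (M / (M + 4))"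
proof -
  have "integrable P (\<lambda>\<omega>. (1 - beta_process j x \<omega>) ^ k)" for k
    using assms beta_process_bounds
    by (intro integrable_const_bound[where B = 1]) (auto simp: abs_le_iff power_le_one)
  from this this[of 1] show ?thesis
    using assms integral_one_minus_beta_process_power[of x 1 j] integral_one_minus_beta_process_power[of x 2 j]
      integral_one_minus_beta_process_power[of x 3 j] integral_one_minus_beta_process_power[of x 4 j]
    by (simp add: prob_space)
qed

lemma M_div_less_1: "0 < c \<Longrightarrow> M / (M + c) < 1"
  using M_pos by (simp add: divide_less_eq)

lemma mixed_moment_2_0: "x1 \<in> S \<Longrightarrow> mixed_moment x1 x2 2 0 = M / (M + 2)"
  using integral_one_minus_beta_process_power[of x1 2 0] by (simp add: mixed_moment_def sq_factor_def)

lemma mixed_moment_0_2: "x2 \<in> S \<Longrightarrow> mixed_moment x1 x2 0 2 = M / (M + 2)"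
  using integral_one_minus_beta_process_power[of x2 2 0] by (simp add: mixed_moment_def sq_factor_def)

lemma integral_beta_process_sq:
  assumes "x \<in> S" shows "(\<integral>\<omega>. (beta_process j x \<omega>)\<^sup>2 \<partial>P) = 2 / ((M + 1) * (M + 2))"
proof -
  have "(\<lambda>\<omega>. (beta_process j x \<omega>)\<^sup>2) = (\<lambda>\<omega>. 1 + (- 2) * (1 - beta_process j x \<omega>)
      + 1 * (1 - beta_process j x \<omega>)\<^sup>2 + 0 * (1 - beta_process j x \<omega>) ^ 3 + 0 * (1 - beta_process j x \<omega>) ^ 4)"
    by (simp add: power2_eq_square algebra_simps)
  then have "(\<integral>\<omega>. (beta_process j x \<omega>)\<^sup>2 \<partial>P) = 1 + (- 2) * (M / (M + 1)) + 1 * (M / (M + 2))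
      + 0 * (M / (M + 3)) + 0 * (M / (M + 4))"
    by (simp only: integral_quartic_one_minus_beta_process[OF assms])
  also have "\<dots> = 2 / ((M + 1) * (M + 2))"
    using M_pos by (simp add: field_simps)
  finally show ?thesis .
qed

lemma integral_beta_process:
  assumes "x \<in> S" shows "(\<integral>\<omega>. beta_process j x \<omega> \<partial>P) = 1 / (M + 1)"
proof -
  have "(\<lambda>\<omega>. beta_process j x \<omega>) = (\<lambda>\<omega>. 1 + (- 1) * (1 - beta_process j x \<omega>)
      + 0 * (1 - beta_process j x \<omega>)\<^sup>2 + 0 * (1 - beta_process j x \<omega>) ^ 3 + 0 * (1 - beta_process j x \<omega>) ^ 4)"
    by simp
  then have "(\<integral>\<omega>. beta_process j x \<omega> \<partial>P) = 1 + (- 1) * (M / (M + 1)) + 0 * (M / (M + 2))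
      + 0 * (M / (M + 3)) + 0 * (M / (M + 4))"
    by (simp only: integral_quartic_one_minus_beta_process[OF assms])
  also have "\<dots> = 1 / (M + 1)"
    using M_pos by (simp add: field_simps)
  finally show ?thesis .
qed

lemma mixed_moment_1_0: "x1 \<in> S \<Longrightarrow> mixed_moment x1 x2 1 0 = 2 / ((M + 1) * (M + 2))"
  by (simp add: mixed_moment_def sq_factor_def integral_beta_process_sq)

lemma mixed_moment_0_1: "x2 \<in> S \<Longrightarrow> mixed_moment x1 x2 0 1 = 2 / ((M + 1) * (M + 2))"
  by (simp add: mixed_moment_def sq_factor_def integral_beta_process_sq)

lemma mixed_moment_2_2_less_1:
  assumes "x1 \<in> S" "x2 \<in> S" shows "mixed_moment x1 x2 2 2 < 1"
proof -
  have "mixed_moment x1 x2 2 2 \<le> mixed_moment x1 x2 2 0"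
    unfolding mixed_moment_def
    by (rule integral_mono[OF integrable_sq_factor_beta_process[OF assms] integrable_sq_factor_beta_process[OF assms]])
       (use sq_factor_bounds[OF beta_process_bounds] in \<open>auto intro: mult_left_le\<close>)
  then show ?thesis using assms M_div_less_1[of 2] by (simp add: mixed_moment_2_0)
qed

lemma mixed_moment_diagonal:
  assumes "x \<in> S"
  shows "mixed_moment x x 1 1 = 24 / ((M + 1) * (M + 2) * (M + 3) * (M + 4))"
    and "mixed_moment x x 1 2 = 2 * M / ((M + 2) * (M + 3) * (M + 4))"
    and "mixed_moment x x 2 2 = M / (M + 4)"
proof -
  have pos: "M + 1 \<noteq> 0" "M + 2 \<noteq> 0" "M + 3 \<noteq> 0" "M + 4 \<noteq> 0" using M_pos by auto
  have "mixed_moment x x 1 1 = 1 - 4 * (M / (M + 1)) + 6 * (M / (M + 2)) - 4 * (M / (M + 3)) + M / (M + 4)"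
    using integral_quartic_one_minus_beta_process[OF assms, where a = 1 and b = "-4" and c = 6 and d = "-4" and e = 1 and j = 0]
    by (simp add: mixed_moment_def sq_factor_def power2_eq_square power3_eq_cube power4_eq_xxxx algebra_simps)
  then show "mixed_moment x x 1 1 = 24 / ((M + 1) * (M + 2) * (M + 3) * (M + 4))"
    using pos by (simp add: divide_simps) (simp add: algebra_simps)
  have "mixed_moment x x 1 2 = M / (M + 2) - 2 * (M / (M + 3)) + M / (M + 4)"
    using integral_quartic_one_minus_beta_process[OF assms, where a = 0 and b = 0 and c = 1 and d = "-2" and e = 1 and j = 0]
    by (simp add: mixed_moment_def sq_factor_def power2_eq_square power3_eq_cube power4_eq_xxxx algebra_simps)
  then show "mixed_moment x x 1 2 = 2 * M / ((M + 2) * (M + 3) * (M + 4))"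
    using pos by (simp add: divide_simps) (simp add: algebra_simps)
  show "mixed_moment x x 2 2 = M / (M + 4)"
    using integral_quartic_one_minus_beta_process[OF assms, where a = 0 and b = 0 and c = 0 and d = 0 and e = 1 and j = 0]
    by (simp add: mixed_moment_def sq_factor_def power2_eq_square power4_eq_xxxx algebra_simps)
qed

definition concentration :: "real \<Rightarrow> 'a \<Rightarrow> real" where
  "concentration x \<omega> = (\<Sum>j. (stick (\<lambda>l. beta_process l x \<omega>) j)\<^sup>2)"

lemma concentration_bounds: "0 \<le> concentration x \<omega>" "concentration x \<omega> \<le> 1"
  unfolding concentration_def using stick_sq_bounds(2,3)[OF beta_process_range] by auto

lemma borel_measurable_concentration [measurable (raw)]: "x \<in> S \<Longrightarrow> concentration x \<in> borel_measurable P"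
  unfolding concentration_def stick_def by measurable

lemma integral_concentration:
  assumes "x \<in> S" shows "(\<integral>\<omega>. concentration x \<omega> \<partial>P) = 1 / (M + 1)"
proof -
  have "(\<integral>\<omega>. concentration x \<omega> \<partial>P) = mixed_moment x x 1 0 / (1 - mixed_moment x x 2 0)"
    unfolding concentration_def using assms integral_prod_sq_factors[OF assms assms, where b = "\<lambda>_. 0"]
    by (intro integral_suminf_stick_sq beta_process_range mixed_moment_nonneg)
       (auto simp: mixed_moment_2_0 M_div_less_1)
  also have "\<dots> = 1 / (M + 1)"
  proof -
    have "1 - M / (M + 2) = 2 / (M + 2)" "2 / (M + 2) \<noteq> 0" using M_pos by (simp_all add: field_simps)
    moreover have "2 / ((M + 1) * (M + 2)) = 2 / (M + 2) * (1 / (M + 1))" by simp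
    ultimately show ?thesis unfolding mixed_moment_1_0[OF assms] mixed_moment_2_0[OF assms]
      by (simp only: nonzero_mult_div_cancel_left not_False_eq_True)
  qed
  finally show ?thesis .
qed

lemma integral_concentration_mult:
  assumes "x1 \<in> S" "x2 \<in> S"
  defines "m \<equiv> mixed_moment x1 x2"
  shows "(\<integral>\<omega>. concentration x1 \<omega> * concentration x2 \<omega> \<partial>P)
    = (m 1 1 * (1 - m 2 0) + 2 * m 1 0 * m 1 2) / ((1 - m 2 0) * (1 - m 2 2))"
proof -
  have "(\<integral>\<omega>. concentration x1 \<omega> * concentration x2 \<omega> \<partial>P)
      = (m 1 1 + m 1 2 * m 0 1 / (1 - m 0 2) + m 2 1 * m 1 0 / (1 - m 2 0)) / (1 - m 2 2)"
    unfolding concentration_def m_def using assms M_pos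
    by (intro integral_suminf_stick_sq_mult integral_prod_sq_factors beta_process_range
        mixed_moment_nonneg mixed_moment_2_2_less_1) (auto simp: mixed_moment_2_0 mixed_moment_0_2 M_div_less_1)
  moreover have "m 0 1 = m 1 0" "m 0 2 = m 2 0" "m 2 1 = m 1 2"
    unfolding m_def using assms(1,2)
    by (simp_all only: mixed_moment_0_1 mixed_moment_1_0 mixed_moment_0_2 mixed_moment_2_0 mixed_moment_2_1)
  moreover have "1 - m 2 0 \<noteq> 0" unfolding m_def using assms(1) M_div_less_1[of 2] by (simp add: mixed_moment_2_0)
  then have "m 1 1 + m 1 2 * m 1 0 / (1 - m 2 0) + m 1 2 * m 1 0 / (1 - m 2 0)
      = (m 1 1 * (1 - m 2 0) + 2 * m 1 0 * m 1 2) / (1 - m 2 0)"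
    by (simp add: add_divide_distrib mult.commute)
  ultimately show ?thesis by (simp add: divide_divide_eq_left)
qed

lemma integral_concentration_sq:
  assumes "x \<in> S"
  shows "(\<integral>\<omega>. concentration x \<omega> * concentration x \<omega> \<partial>P) = (6 + M) / ((M + 1) * (M + 2) * (M + 3))"
proof -
  have pos: "M + 1 \<noteq> 0" "M + 2 \<noteq> 0" "M + 3 \<noteq> 0" "M + 4 \<noteq> 0" using M_pos by auto
  have "(24 / ((M + 1) * (M + 2) * (M + 3) * (M + 4)) * (1 - M / (M + 2))
      + 2 * (2 / ((M + 1) * (M + 2))) * (2 * M / ((M + 2) * (M + 3) * (M + 4))))
      / ((1 - M / (M + 2)) * (1 - M / (M + 4))) = (6 + M) / ((M + 1) * (M + 2) * (M + 3))"
    using pos by (simp add: divide_simps) (simp add: algebra_simps)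
  then show ?thesis
    unfolding integral_concentration_mult[OF assms assms] mixed_moment_diagonal[OF assms]
      mixed_moment_1_0[OF assms] mixed_moment_2_0[OF assms] .
qed

lemma integral_centered_simpson_mult:
  assumes "x1 \<in> S" "x2 \<in> S"
  shows "(\<integral>\<omega>. (1 - concentration x1 \<omega> - (\<integral>\<omega>. 1 - concentration x1 \<omega> \<partial>P))
      * (1 - concentration x2 \<omega> - (\<integral>\<omega>. 1 - concentration x2 \<omega> \<partial>P)) \<partial>P)
    = (\<integral>\<omega>. concentration x1 \<omega> * concentration x2 \<omega> \<partial>P) - (1 / (M + 1))\<^sup>2"
proof -
  have bound: "\<bar>concentration x \<omega>\<bar> \<le> 1" for x \<omega> using concentration_bounds[of x \<omega>] by auto
  have "integrable P (concentration x)" if "x \<in> S" for x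
    using that bound by (intro integrable_const_bound[where B = 1]) auto
  then have integral_one_minus: "(\<integral>\<omega>. 1 - concentration x \<omega> \<partial>P) = 1 - expectation (concentration x)"
    if "x \<in> S" for x
    using that by (simp add: prob_space)
  have centered: "(1 - a - (1 - A)) * (1 - b - (1 - B)) = (a - A) * (b - B)" for a b A B :: real
    by (simp add: algebra_simps)
  show ?thesis
    unfolding integral_one_minus[OF assms(1)] integral_one_minus[OF assms(2)] centered
    unfolding integral_centered_mult[OF borel_measurable_concentration[OF assms(1)]
        borel_measurable_concentration[OF assms(2)] bound bound]
    unfolding integral_concentration[OF assms(1)] integral_concentration[OF assms(2)]
    by (simp add: power2_eq_square)
qed

lemma expectation_simpson: "x \<in> S \<Longrightarrow> (\<integral>\<omega>. 1 - concentration x \<omega> \<partial>P) = M / (1 + M)"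
  using concentration_bounds M_pos
  by (subst Bochner_Integration.integral_diff)
     (auto intro!: integrable_const_bound[where B = 1] simp: integral_concentration prob_space field_simps)

lemma variance_simpson:
  assumes "x \<in> S"
  shows "variance (\<lambda>\<omega>. 1 - concentration x \<omega>) = 2 * M / ((M + 1)\<^sup>2 * (M + 2) * (M + 3))"
proof -
  have "variance (\<lambda>\<omega>. 1 - concentration x \<omega>) = (6 + M) / ((M + 1) * (M + 2) * (M + 3)) - (1 / (M + 1))\<^sup>2"
    using integral_centered_simpson_mult[OF assms assms] by (simp add: power2_eq_square integral_concentration_sq assms)
  also have "\<dots> = 2 * M / ((M + 1)\<^sup>2 * (M + 2) * (M + 3))"
    using M_pos by (simp add: divide_simps) (simp add: algebra_simps power2_eq_square)
  finally show ?thesis .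
qed

lemma covariance_simpson:
  assumes "x1 \<in> S" "x2 \<in> S"
  defines "\<nu> \<equiv> \<lambda>i j. \<integral>\<omega>. beta_process 0 x1 \<omega> ^ i * beta_process 0 x2 \<omega> ^ j \<partial>P"
    and "\<omega>' \<equiv> \<lambda>i j. \<integral>\<omega>. (1 - beta_process 0 x1 \<omega>) ^ i * (1 - beta_process 0 x2 \<omega>) ^ j \<partial>P"
    and "\<gamma> \<equiv> \<lambda>i j. \<integral>\<omega>. beta_process 0 x1 \<omega> ^ i * (1 - beta_process 0 x2 \<omega>) ^ j \<partial>P"
  shows "(\<integral>\<omega>. (1 - concentration x1 \<omega> - (\<integral>\<omega>. 1 - concentration x1 \<omega> \<partial>P))
      * (1 - concentration x2 \<omega> - (\<integral>\<omega>. 1 - concentration x2 \<omega> \<partial>P)) \<partial>P)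
    = (\<nu> 2 2 * (1 - \<omega>' 2 0) + 2 * \<nu> 2 0 * \<gamma> 2 2) / ((1 - \<omega>' 2 0) * (1 - \<omega>' 2 2)) - (\<nu> 1 0)\<^sup>2"
proof -
  have "\<nu> 2 2 = mixed_moment x1 x2 1 1" "\<nu> 2 0 = mixed_moment x1 x2 1 0" "\<gamma> 2 2 = mixed_moment x1 x2 1 2"
    "\<omega>' 2 0 = mixed_moment x1 x2 2 0" "\<omega>' 2 2 = mixed_moment x1 x2 2 2"
    unfolding \<nu>_def \<omega>'_def \<gamma>_def mixed_moment_def by (simp_all add: sq_factor_def)
  moreover have "\<nu> 1 0 = 1 / (M + 1)"
    unfolding \<nu>_def using integral_beta_process[OF assms(1)] by simp
  ultimately show ?thesis
    unfolding integral_centered_simpson_mult[OF assms(1,2)] integral_concentration_mult[OF assms(1,2)]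
    by (simp only:)
qed

end

theorem proposition1:
  fixes P :: "'a measure"
    and S :: "real set"
    and M \<sigma>Z :: real
    and K :: "real \<Rightarrow> real"
    and Z :: "nat \<Rightarrow> real \<Rightarrow> 'a \<Rightarrow> real"
    and V :: "nat \<Rightarrow> real \<Rightarrow> 'a \<Rightarrow> real"
    and H :: "real \<Rightarrow> 'a \<Rightarrow> real"
  assumes "prob_space P"
    and "M > 0" and "\<sigma>Z > 0"
    and "K 0 = 1"
    and "\<And>j. centered_gaussian_process P S (\<lambda>x1 x2. \<sigma>Z\<^sup>2 * K (x1 - x2)) (Z j)"
    and "prob_space.indep_vars P (\<lambda>_. Pi\<^sub>M S (\<lambda>_. borel))
           (\<lambda>j \<omega>. restrict (\<lambda>x. Z j x \<omega>) S) UNIV"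
    and "\<And>j x \<omega>. V j x \<omega> = Beta_inv_cdf M (Phi \<sigma>Z (Z j x \<omega>))"
    and "\<And>x \<omega>. H x \<omega> = simpson (stick (\<lambda>j. V j x \<omega>))"
  shows "(\<forall>x\<in>S.
           integral\<^sup>L P (H x) = M / (1 + M) \<and>
           prob_space.variance P (H x) = 2 * M / ((M + 1)\<^sup>2 * (M + 2) * (M + 3))) \<and>
         (\<forall>x1\<in>S. \<forall>x2\<in>S.
           (let \<nu> = (\<lambda>i j. integral\<^sup>L P (\<lambda>\<omega>. V 0 x1 \<omega> ^ i * V 0 x2 \<omega> ^ j));
                \<omega>' = (\<lambda>i j. integral\<^sup>L P (\<lambda>\<omega>. (1 - V 0 x1 \<omega>) ^ i * (1 - V 0 x2 \<omega>) ^ j));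
                \<gamma> = (\<lambda>i j. integral\<^sup>L P (\<lambda>\<omega>. V 0 x1 \<omega> ^ i * (1 - V 0 x2 \<omega>) ^ j))
            in integral\<^sup>L P (\<lambda>\<omega>. (H x1 \<omega> - integral\<^sup>L P (H x1)) * (H x2 \<omega> - integral\<^sup>L P (H x2)))
               = (\<nu> 2 2 * (1 - \<omega>' 2 0) + 2 * \<nu> 2 0 * \<gamma> 2 2) / ((1 - \<omega>' 2 0) * (1 - \<omega>' 2 2))
                 - (\<nu> 1 0)\<^sup>2))"
proof -
  interpret dgem_prior P S M \<sigma>Z K Z
    using assms(1-6) by (simp add: dgem_prior_def dgem_prior_axioms_def)
  have V: "V = (\<lambda>j x \<omega>. beta_of_normal M \<sigma>Z (Z j x \<omega>))"
    using assms(7) by (simp add: beta_of_normal_def fun_eq_iff)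
  have H: "H = (\<lambda>x \<omega>. 1 - concentration x \<omega>)"
    using assms(8) by (simp add: V simpson_def concentration_def fun_eq_iff)
  show ?thesis
    unfolding H V Let_def by (intro conjI ballI expectation_simpson variance_simpson covariance_simpson)
qed

end
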